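(* Let $\frac12\le\alpha\le1$, $\mu>0$, and $\theta_0\in H^s$ for some $s>1$. (a) There exists $T>0$ depending only on $\|\theta_0\|_s$ (and $\mu$) such that the regularized QG initial value problem has a unique solution $\theta\in L^\infty([0,T];H^s)$. (b) If $T_*$ denotes the supremum of all $T>0$ such that the regularized QG initial value problem has a solution in $L^\infty([0,T];H^s)$, then either $T_*=\infty$ or $\limsup_{t\uparrow T_*}\|\theta(\cdot,t)\|_s=\infty$.
   Context: Setting: $\Omega=[0,2\pi]^2$ with periodic boundary conditions; all functions are periodic with zero mean. For a periodic distribution $f$, $\hat f(k)=(2\pi)^{-2}\int_\Omega f(x)e^{-ik\cdot x}\,dx$, $k\in\mathbb Z^2$. $\Lambda=(-\Delta)^{1/2}$, $\widehat{\Lambda^\beta f}(k)=|k|^\beta\hat f(k)$. Riesz transforms: $\widehat{\mathcal R_j f}(k)=-i\frac{k_j}{|k|}\hat f(k)$, $k\ne0$. $\|f\|_s=(\sum_k|k|^{2s}|\hat f(k)|^2)^{1/2}$, $H^s=\{f:\|f\|_s<\infty\}$. The regularized QG initial value problem (with zero forcing) is $$\theta_t+u\cdot\nabla\theta+\mu(-\Delta)^\alpha\theta_t=0,\quad u=(-\mathcal R_2\theta,\mathcal R_1\theta),\quad\theta(x,0)=\theta_0(x),$$ with $0\le\alpha\le1$, $\mu>0$. A solution on $[0,T]$ in $L^\infty([0,T];H^s)$ means $\theta\in L^\infty([0,T];H^s)$ satisfying the integral form $$\theta(t)=\theta_0-\int_0^t(1+\mu\Lambda^{2\alpha})^{-1}\nabla\cdot\big(u\theta\big)(\tau)\,d\tau,\qquad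 u=(-\mathcal R_2\theta,\mathcal R_1\theta).$$ *)

theory Defs
  imports "HOL-Analysis.Analysis" "HOL-Library.Liminf_Limsup"
begin

text \<open>Periodic functions on [0,2pi]^2 are represented by their Fourier coefficients
  indexed by k in Z^2 (pairs of integers).\<close>

type_synonym fcoef = "int \<times> int \<Rightarrow> complex"

definition knorm :: "int \<times> int \<Rightarrow> real" where
  "knorm k = sqrt (real_of_int (fst k) ^ 2 + real_of_int (snd k) ^ 2)"

text \<open>Real-valued with zero mean.\<close>
definition zm_real :: "fcoef \<Rightarrow> bool" where
  "zm_real f \<longleftrightarrow> f (0, 0) = 0 \<and> (\<forall>k. f (- fst k, - snd k) = cnj (f k))"

definition in_Hs :: "real \<Rightarrow> fcoef \<Rightarrow> bool" where
  "in_Hs s f \<longleftrightarrow> (\<lambda>k. knorm k powr (2 * s) * (cmod (f k))\<^sup>2) summable_on UNIV"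

definition hs_norm :: "real \<Rightarrow> fcoef \<Rightarrow> real" where
  "hs_norm s f = sqrt (\<Sum>\<^sub>\<infinity>k. knorm k powr (2 * s) * (cmod (f k))\<^sup>2)"

definition riesz1 :: "fcoef \<Rightarrow> fcoef" where
  "riesz1 f k = - \<i> * of_real (real_of_int (fst k) / knorm k) * f k"

definition riesz2 :: "fcoef \<Rightarrow> fcoef" where
  "riesz2 f k = - \<i> * of_real (real_of_int (snd k) / knorm k) * f k"

text \<open>Fourier coefficients of a product: discrete convolution.\<close>
definition conv :: "fcoef \<Rightarrow> fcoef \<Rightarrow> fcoef" where
  "conv f g k = (\<Sum>\<^sub>\<infinity>j. f j * g (fst k - fst j, snd k - snd j))"

text \<open>Fourier coefficients of div(u theta), u = (-R_2 theta, R_1 theta).\<close>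
definition qg_nonlin :: "fcoef \<Rightarrow> fcoef" where
  "qg_nonlin th k =
     \<i> * of_int (fst k) * conv (\<lambda>j. - riesz2 th j) th k
   + \<i> * of_int (snd k) * conv (riesz1 th) th k"

text \<open>Solution of the regularized QG problem on [0,T] in L^infty([0,T];H^s),
  in the integral (mild) form, written coefficientwise:
  theta(t) = theta0 - int_0^t (1 + mu Lambda^(2 alpha))^(-1) div(u theta)(tau) dtau.\<close>
definition qg_sol :: "real \<Rightarrow> real \<Rightarrow> real \<Rightarrow> fcoef \<Rightarrow> real \<Rightarrow> (real \<Rightarrow> fcoef) \<Rightarrow> bool" where
  "qg_sol \<alpha> \<mu> s th0 T th \<longleftrightarrow>
     (\<forall>t\<in>{0..T}. zm_real (th t) \<and> in_Hs s (th t)) \<and>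
     (\<exists>M. \<forall>t\<in>{0..T}. hs_norm s (th t) \<le> M) \<and>
     (\<forall>t\<in>{0..T}. \<forall>k.
        set_integrable lborel {0..t}
          (\<lambda>\<tau>. qg_nonlin (th \<tau>) k / of_real (1 + \<mu> * knorm k powr (2 * \<alpha>))) \<and>
        th t k = th0 k - (LINT \<tau>:{0..t}|lborel.
          qg_nonlin (th \<tau>) k / of_real (1 + \<mu> * knorm k powr (2 * \<alpha>))))"

end

theory Submission
  imports Defs
begin

(* The problem is treated coefficientwise on Z^2.  For s > 1 the space H^s is an algebra:
   Peetre's inequality |k|^s <= 2^s (|j|^s + |k - j|^s) and Young's inequality for
   l^2 * l^1 reduce the convolution estimate to the l^1 bound sum |f k| <= C ||f||_s, which is
   Cauchy-Schwarz against the convergent lattice sum of |k|^(-2s).  Because alpha >= 1/2,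
   the multiplier |k| / (1 + mu |k|^(2 alpha)) is at most 1/mu, so it absorbs the derivative in
   div(u theta), and B(f) = (1 + mu Lambda^(2 alpha))^(-1) div(u(f) f) satisfies
   ||B f - B g||_s <= K (||f||_s + ||g||_s) ||f - g||_s.  Picard iteration among H^s-bounded,
   H^s-Lipschitz paths then produces a solution on an interval whose length depends only on
   ||theta_0||_s, and the same contraction estimate on short consecutive intervals gives
   uniqueness.  If the H^s norm stayed bounded near the maximal time T_*, a local solution
   started close to T_* would extend past T_*. *)

section \<open>Lattice indices\<close>

definition idx_diff :: "int \<times> int \<Rightarrow> int \<times> int \<Rightarrow> int \<times> int" where
  "idx_diff k j = (fst k - fst j, snd k - snd j)"

definition idx_neg :: "int \<times> int \<Rightarrow> int \<times> int" where
  "idx_neg k = (- fst k, - snd k)"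

lemma idx_diff_idx_diff [simp]: "idx_diff k (idx_diff k j) = j"
  by (simp add: idx_diff_def)

lemma bij_idx_diff: "bij (idx_diff k)"
  by (rule o_bij[of "idx_diff k"]) (auto simp: fun_eq_iff)

lemma idx_neg_idx_neg [simp]: "idx_neg (idx_neg k) = k"
  by (simp add: idx_neg_def)

lemma bij_idx_neg: "bij idx_neg"
  by (rule o_bij[of idx_neg]) (auto simp: fun_eq_iff)

lemma idx_diff_idx_neg: "idx_diff (idx_neg k) (idx_neg j) = idx_neg (idx_diff k j)"
  by (simp add: idx_diff_def idx_neg_def)

lemma conv_idx_diff: "conv f g k = (\<Sum>\<^sub>\<infinity>j. f j * g (idx_diff k j))"
  by (simp add: conv_def idx_diff_def)

lemma zm_real_iff_idx_neg: "zm_real f \<longleftrightarrow> f (0,0) = 0 \<and> (\<forall>k. f (idx_neg k) = cnj (f k))"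
  by (simp add: zm_real_def idx_neg_def)

lemma sum_idx_diff_le:
  fixes Y :: "int \<times> int \<Rightarrow> real"
  assumes "\<And>J. finite J \<Longrightarrow> sum Y J \<le> B" and "finite J"
  shows "(\<Sum>j\<in>J. Y (idx_diff k j)) \<le> B" and "(\<Sum>j\<in>J. Y (idx_diff j k)) \<le> B"
proof -
  have "inj (idx_diff k)"
    using bij_idx_diff bij_is_inj by blast
  then have "(\<Sum>j\<in>J. Y (idx_diff k j)) = sum Y (idx_diff k ` J)"
    by (simp add: sum.reindex inj_on_subset[of _ UNIV])
  then show "(\<Sum>j\<in>J. Y (idx_diff k j)) \<le> B"
    using assms by simp
  have "inj (\<lambda>j. idx_diff j k)"
    by (rule injI) (auto simp: idx_diff_def prod_eq_iff)
  then have "(\<Sum>j\<in>J. Y (idx_diff j k)) = sum Y ((\<lambda>j. idx_diff j k) ` J)"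
    by (simp add: sum.reindex inj_on_subset[of _ UNIV])
  then show "(\<Sum>j\<in>J. Y (idx_diff j k)) \<le> B"
    using assms by simp
qed

lemma knorm_nonneg [simp]: "0 \<le> knorm k"
  by (simp add: knorm_def)

lemma knorm_idx_neg [simp]: "knorm (idx_neg k) = knorm k"
  by (simp add: knorm_def idx_neg_def)

lemma knorm_eq_cmod: "knorm k = cmod (Complex (of_int (fst k)) (of_int (snd k)))"
  unfolding knorm_def by (simp add: complex_norm)

lemma knorm_ge_1:
  assumes "k \<noteq> (0,0)"
  shows "1 \<le> knorm k"
proof -
  obtain a b where k: "k = (a, b)"
    by fastforce
  have "a \<noteq> 0 \<or> b \<noteq> 0"
    using assms k by auto
  moreover have "1 \<le> i\<^sup>2" if "i \<noteq> 0" for i :: int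
    using that by (simp add: int_one_le_iff_zero_less)
  ultimately have "1 \<le> a\<^sup>2 \<or> 1 \<le> b\<^sup>2"
    by blast
  then have "(1::int) \<le> a\<^sup>2 + b\<^sup>2"
    by (auto intro: add_increasing add_increasing2)
  then have "(1::real) \<le> (real_of_int a)\<^sup>2 + (real_of_int b)\<^sup>2"
    by (metis of_int_add of_int_le_iff of_int_1 of_int_power)
  then show ?thesis
    unfolding knorm_def k by simp
qed

lemma knorm_pos: "k \<noteq> (0,0) \<Longrightarrow> 0 < knorm k"
  using knorm_ge_1[of k] by linarith

lemma knorm_triangle: "knorm k \<le> knorm j + knorm (idx_diff k j)"
proof -
  have "Complex (of_int (fst k)) (of_int (snd k)) =
      Complex (of_int (fst j)) (of_int (snd j)) +
      Complex (of_int (fst (idx_diff k j))) (of_int (snd (idx_diff k j)))"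
    by (simp add: complex_eq_iff idx_diff_def)
  then show ?thesis
    unfolding knorm_eq_cmod by (simp only: norm_triangle_ineq)
qed

lemma abs_fst_le_knorm: "\<bar>real_of_int (fst k)\<bar> \<le> knorm k"
  unfolding knorm_def by (rule real_le_rsqrt) simp

lemma abs_snd_le_knorm: "\<bar>real_of_int (snd k)\<bar> \<le> knorm k"
  unfolding knorm_def by (rule real_le_rsqrt) simp

lemma knorm_powr_peetre:
  assumes "0 \<le> s"
  shows "knorm k powr s \<le> 2 powr s * (knorm j powr s + knorm (idx_diff k j) powr s)"
proof -
  define M where "M = max (knorm j) (knorm (idx_diff k j))"
  have "0 \<le> M"
    unfolding M_def by (simp add: le_max_iff_disj)
  have "knorm k \<le> 2 * M"
    using knorm_triangle[of k j] unfolding M_def by linarith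
  then have "knorm k powr s \<le> (2 * M) powr s"
    by (rule powr_mono2[OF assms knorm_nonneg])
  also have "\<dots> = 2 powr s * M powr s"
    using \<open>0 \<le> M\<close> by (simp add: powr_mult)
  also have "M powr s \<le> knorm j powr s + knorm (idx_diff k j) powr s"
    unfolding M_def by (cases "knorm j \<le> knorm (idx_diff k j)") (simp_all add: max_def)
  then have "2 powr s * M powr s \<le> 2 powr s * (knorm j powr s + knorm (idx_diff k j) powr s)"
    by (rule mult_left_mono) simp
  finally show ?thesis .
qed

lemma powr_square: "(a powr x)\<^sup>2 = a powr (2 * (x::real))"
  by (simp add: power2_eq_square powr_add[symmetric])

section \<open>Weighted l2 norms of real sequences\<close>

definition hs_partial :: "real \<Rightarrow> (int \<times> int \<Rightarrow> real) \<Rightarrow> (int \<times> int) set \<Rightarrow> real" where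
  "hs_partial s X F = (\<Sum>k\<in>F. knorm k powr (2 * s) * (X k)\<^sup>2)"

definition in_Hs_real :: "real \<Rightarrow> (int \<times> int \<Rightarrow> real) \<Rightarrow> bool" where
  "in_Hs_real s X \<longleftrightarrow> (\<lambda>k. knorm k powr (2 * s) * (X k)\<^sup>2) summable_on UNIV"

definition hs_norm_real :: "real \<Rightarrow> (int \<times> int \<Rightarrow> real) \<Rightarrow> real" where
  "hs_norm_real s X = sqrt (\<Sum>\<^sub>\<infinity>k. knorm k powr (2 * s) * (X k)\<^sup>2)"

lemma in_Hs_iff_real: "in_Hs s f \<longleftrightarrow> in_Hs_real s (\<lambda>k. cmod (f k))"
  by (simp add: in_Hs_def in_Hs_real_def)

lemma hs_norm_eq_real: "hs_norm s f = hs_norm_real s (\<lambda>k. cmod (f k))"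
  by (simp add: hs_norm_def hs_norm_real_def)

lemma hs_norm_real_nonneg [simp]: "0 \<le> hs_norm_real s X"
  unfolding hs_norm_real_def by (simp add: infsum_nonneg)

lemma hs_norm_nonneg [simp]: "0 \<le> hs_norm s f"
  by (simp add: hs_norm_eq_real)

lemma hs_partial_eq_L2_set: "hs_partial s X F = (L2_set (\<lambda>k. knorm k powr s * X k) F)\<^sup>2"
  unfolding hs_partial_def L2_set_def by (simp add: sum_nonneg power_mult_distrib powr_square)

lemma hs_partial_le:
  assumes "in_Hs_real s X" "finite F"
  shows "hs_partial s X F \<le> (hs_norm_real s X)\<^sup>2"
proof -
  have "hs_partial s X F \<le> (\<Sum>\<^sub>\<infinity>k. knorm k powr (2 * s) * (X k)\<^sup>2)"
    unfolding hs_partial_def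
    by (rule finite_sum_le_infsum) (use assms in \<open>auto simp: in_Hs_real_def\<close>)
  also have "\<dots> = (hs_norm_real s X)\<^sup>2"
    unfolding hs_norm_real_def by (simp add: infsum_nonneg)
  finally show ?thesis .
qed

lemma L2_set_le_hs_norm_real:
  assumes "in_Hs_real s X" "finite F"
  shows "L2_set (\<lambda>k. knorm k powr s * X k) F \<le> hs_norm_real s X"
  using hs_partial_le[OF assms] by (simp add: hs_partial_eq_L2_set power2_le_iff_abs_le)

lemma summable_on_nonneg_le:
  fixes f :: "'a \<Rightarrow> real"
  assumes "\<And>x. 0 \<le> f x" "\<And>J. finite J \<Longrightarrow> sum f J \<le> B"
  shows "f summable_on UNIV" and "infsum f UNIV \<le> B"
proof -
  show sm: "f summable_on UNIV"
  proof (rule nonneg_bdd_above_summable_on)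
    show "bdd_above (sum f ` {F. F \<subseteq> UNIV \<and> finite F})"
      by (rule bdd_aboveI[where M=B]) (use assms(2) in auto)
  qed (use assms(1) in simp)
  show "infsum f UNIV \<le> B"
    by (rule infsum_le_finite_sums[OF sm]) (use assms(2) in simp)
qed

lemma hs_norm_realI:
  assumes "0 \<le> M" "\<And>F. finite F \<Longrightarrow> hs_partial s X F \<le> M\<^sup>2"
  shows "in_Hs_real s X" and "hs_norm_real s X \<le> M"
proof -
  show "in_Hs_real s X"
    unfolding in_Hs_real_def by (rule summable_on_nonneg_le(1)) (use assms in \<open>auto simp: hs_partial_def\<close>)
  have "(\<Sum>\<^sub>\<infinity>k. knorm k powr (2 * s) * (X k)\<^sup>2) \<le> M\<^sup>2"
    by (rule summable_on_nonneg_le(2)) (use assms in \<open>auto simp: hs_partial_def\<close>)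
  then have "hs_norm_real s X \<le> sqrt (M\<^sup>2)"
    unfolding hs_norm_real_def by (rule real_sqrt_le_mono)
  with assms(1) show "hs_norm_real s X \<le> M"
    by simp
qed

lemma hs_norm_real_L2_setI:
  assumes "0 \<le> M" "\<And>F. finite F \<Longrightarrow> L2_set (\<lambda>k. knorm k powr s * X k) F \<le> M"
  shows "in_Hs_real s X" and "hs_norm_real s X \<le> M"
  using hs_norm_realI[of M s X] assms by (simp_all add: hs_partial_eq_L2_set power_mono)

lemma hs_norm_real_dominated_add:
  assumes "in_Hs_real s X" "in_Hs_real s Y" "\<And>k. \<bar>Z k\<bar> \<le> \<bar>X k\<bar> + \<bar>Y k\<bar>"
  shows "in_Hs_real s Z" and "hs_norm_real s Z \<le> hs_norm_real s X + hs_norm_real s Y"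
proof -
  have "L2_set (\<lambda>k. knorm k powr s * Z k) F \<le> hs_norm_real s X + hs_norm_real s Y"
    if F: "finite F" for F
  proof -
    have "L2_set (\<lambda>k. knorm k powr s * Z k) F = L2_set (\<lambda>k. knorm k powr s * \<bar>Z k\<bar>) F"
      by (simp add: L2_set_def power_mult_distrib)
    also have "\<dots> \<le> L2_set (\<lambda>k. \<bar>knorm k powr s * X k\<bar> + \<bar>knorm k powr s * Y k\<bar>) F"
      by (rule L2_set_mono)
        (auto simp: abs_mult distrib_left[symmetric] intro: mult_left_mono assms(3))
    also have "\<dots> \<le> L2_set (\<lambda>k. \<bar>knorm k powr s * X k\<bar>) F + L2_set (\<lambda>k. \<bar>knorm k powr s * Y k\<bar>) F"
      by (rule L2_set_triangle_ineq)
    also have "\<dots> = L2_set (\<lambda>k. knorm k powr s * X k) F + L2_set (\<lambda>k. knorm k powr s * Y k) F"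
      by (simp add: L2_set_def)
    also have "\<dots> \<le> hs_norm_real s X + hs_norm_real s Y"
      by (intro add_mono L2_set_le_hs_norm_real assms F)
    finally show ?thesis .
  qed
  then show "in_Hs_real s Z" and "hs_norm_real s Z \<le> hs_norm_real s X + hs_norm_real s Y"
    using hs_norm_real_L2_setI[of "hs_norm_real s X + hs_norm_real s Y" s Z] by simp_all
qed

lemma hs_norm_real_dominated_scale:
  assumes "in_Hs_real s X" "0 \<le> c" "\<And>k. \<bar>Z k\<bar> \<le> c * \<bar>X k\<bar>"
  shows "in_Hs_real s Z" and "hs_norm_real s Z \<le> c * hs_norm_real s X"
proof -
  have "L2_set (\<lambda>k. knorm k powr s * Z k) F \<le> c * hs_norm_real s X" if F: "finite F" for F
  proof -
    have "L2_set (\<lambda>k. knorm k powr s * Z k) F = L2_set (\<lambda>k. knorm k powr s * \<bar>Z k\<bar>) F"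
      by (simp add: L2_set_def power_mult_distrib)
    also have "\<dots> \<le> L2_set (\<lambda>k. c * \<bar>knorm k powr s * X k\<bar>) F"
      by (rule L2_set_mono)
        (use assms(2) in \<open>auto simp: abs_mult mult.left_commute[of c] intro: mult_left_mono assms(3)\<close>)
    also have "\<dots> = c * L2_set (\<lambda>k. knorm k powr s * X k) F"
      using assms(2) by (simp add: L2_set_right_distrib[symmetric]) (simp add: L2_set_def)
    also have "\<dots> \<le> c * hs_norm_real s X"
      by (intro mult_left_mono L2_set_le_hs_norm_real assms F)
    finally show ?thesis .
  qed
  then show "in_Hs_real s Z" and "hs_norm_real s Z \<le> c * hs_norm_real s X"
    using hs_norm_real_L2_setI[of "c * hs_norm_real s X" s Z] assms(2) by simp_all
qed

lemma abs_le_hs_norm_real: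
  assumes "in_Hs_real s X" "k \<noteq> (0,0)" "0 \<le> s"
  shows "\<bar>X k\<bar> \<le> hs_norm_real s X"
proof -
  have "1 \<le> knorm k powr s"
    using knorm_ge_1[OF assms(2)] assms(3) by (simp add: ge_one_powr_ge_zero)
  then have "\<bar>X k\<bar> \<le> knorm k powr s * \<bar>X k\<bar>"
    using mult_right_mono[of 1 "knorm k powr s" "\<bar>X k\<bar>"] by simp
  also have "\<dots> = L2_set (\<lambda>k. knorm k powr s * X k) {k}"
    by (simp add: abs_mult)
  also have "\<dots> \<le> hs_norm_real s X"
    by (rule L2_set_le_hs_norm_real[OF assms(1)]) simp
  finally show ?thesis .
qed

lemma hs_norm_real_limit:
  assumes "\<And>k. (\<lambda>n. X n k) \<longlonglongrightarrow> Y k" "\<And>n. in_Hs_real s (X n)" "\<And>n. hs_norm_real s (X n) \<le> M"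
  shows "in_Hs_real s Y" and "hs_norm_real s Y \<le> M"
proof -
  have M: "0 \<le> M"
    using assms(3)[of 0] hs_norm_real_nonneg order.trans by blast
  have "hs_partial s Y F \<le> M\<^sup>2" if F: "finite F" for F
  proof -
    have "(\<lambda>n. hs_partial s (X n) F) \<longlonglongrightarrow> hs_partial s Y F"
      unfolding hs_partial_def by (intro tendsto_intros assms(1))
    moreover have "hs_partial s (X n) F \<le> M\<^sup>2" for n
      using hs_partial_le[OF assms(2) F, of n] power_mono[OF assms(3)[of n], of 2] by simp
    ultimately show ?thesis
      using LIMSEQ_le_const2 by blast
  qed
  then show "in_Hs_real s Y" and "hs_norm_real s Y \<le> M"
    using hs_norm_realI[OF M] by blast+
qed

section \<open>The algebra property of H^s for s > 1\<close>

definition lattice_const :: "real \<Rightarrow> real" where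
  "lattice_const s = 4 powr s * (2 * (\<Sum>n. (1 + real n) powr (- s)))\<^sup>2"

lemma lattice_const_nonneg [simp]: "0 \<le> lattice_const s"
  by (simp add: lattice_const_def)

lemma summable_one_plus_powr: "1 < s \<Longrightarrow> summable (\<lambda>n::nat. (1 + real n) powr (- s))"
  using summable_Suc_iff[of "\<lambda>n. real n powr (- s)"] by (simp add: summable_real_powr_iff)

lemma sum_int_powr_le:
  assumes "1 < s" "finite A"
  shows "(\<Sum>m\<in>A. (1 + real_of_int \<bar>m\<bar>) powr (- s)) \<le> 2 * (\<Sum>n. (1 + real n) powr (- s))"
proof -
  define h where "h n = (1 + real n) powr (- s)" for n :: nat
  have "summable h"
    unfolding h_def by (rule summable_one_plus_powr[OF assms(1)])
  have half: "(\<Sum>m\<in>B. h (g m)) \<le> suminf h" if "inj_on g B" "finite B" for g :: "int \<Rightarrow> nat" and B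
    using sum_le_suminf[OF \<open>summable h\<close>, of "g ` B"] that by (simp add: sum.reindex h_def)
  define A1 where "A1 = {m\<in>A. 0 \<le> m}"
  define A2 where "A2 = {m\<in>A. m < 0}"
  have "(\<Sum>m\<in>A1. h (nat m)) \<le> suminf h"
    by (rule half) (use assms(2) in \<open>auto simp: A1_def inj_on_def\<close>)
  moreover have "(\<Sum>m\<in>A2. h (nat (- m))) \<le> suminf h"
    by (rule half) (use assms(2) in \<open>auto simp: A2_def inj_on_def\<close>)
  moreover have "(\<Sum>m\<in>A. (1 + real_of_int \<bar>m\<bar>) powr (- s)) =
      (\<Sum>m\<in>A1. h (nat m)) + (\<Sum>m\<in>A2. h (nat (- m)))"
  proof -
    have "A = A1 \<union> A2" "A1 \<inter> A2 = {}" "finite A1" "finite A2"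
      using assms(2) unfolding A1_def A2_def by auto
    then have "(\<Sum>m\<in>A. (1 + real_of_int \<bar>m\<bar>) powr (- s)) =
        (\<Sum>m\<in>A1. (1 + real_of_int \<bar>m\<bar>) powr (- s)) + (\<Sum>m\<in>A2. (1 + real_of_int \<bar>m\<bar>) powr (- s))"
      by (simp add: sum.union_disjoint)
    also have "\<dots> = (\<Sum>m\<in>A1. h (nat m)) + (\<Sum>m\<in>A2. h (nat (- m)))"
      by (intro arg_cong2[where f="(+)"] sum.cong) (auto simp: A1_def A2_def h_def)
    finally show ?thesis .
  qed
  ultimately show ?thesis
    unfolding h_def by linarith
qed

lemma knorm_powr_neg_le:
  assumes "0 \<le> s" "k \<noteq> (0,0)"
  shows "knorm k powr (- 2 * s) \<le>
    4 powr s * ((1 + real_of_int \<bar>fst k\<bar>) powr (- s) * (1 + real_of_int \<bar>snd k\<bar>) powr (- s))"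
proof -
  obtain m n where k: "k = (m, n)"
    by fastforce
  define q where "q = (real_of_int m)\<^sup>2 + (real_of_int n)\<^sup>2"
  define p where "p = (1 + real_of_int \<bar>m\<bar>) * (1 + real_of_int \<bar>n\<bar>)"
  have "1 \<le> q"
    using knorm_ge_1[OF assms(2)] unfolding knorm_def q_def k by simp
  have "knorm k powr (- 2 * s) = (q powr (1/2)) powr (- 2 * s)"
    using \<open>1 \<le> q\<close> by (simp add: knorm_def q_def k powr_half_sqrt)
  also have "\<dots> = q powr (- s)"
    by (simp add: powr_powr)
  finally have kq: "knorm k powr (- 2 * s) = q powr (- s)" .
  have abs_le_sq: "\<bar>real_of_int i\<bar> \<le> (real_of_int i)\<^sup>2" for i :: int
  proof (cases "i = 0")
    case False
    then have "\<bar>real_of_int i\<bar> * 1 \<le> \<bar>real_of_int i\<bar> * \<bar>real_of_int i\<bar>"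
      by (intro mult_left_mono) auto
    then show ?thesis
      by (simp add: power2_eq_square abs_mult[symmetric])
  qed simp
  have "2 * (\<bar>real_of_int m\<bar> * \<bar>real_of_int n\<bar>) \<le> q"
    using sum_squares_bound[of "\<bar>real_of_int m\<bar>" "\<bar>real_of_int n\<bar>"] unfolding q_def by simp
  then have "p \<le> 4 * q"
    using abs_le_sq[of m] abs_le_sq[of n] \<open>1 \<le> q\<close> unfolding p_def q_def by (simp add: algebra_simps)
  moreover have "1 \<le> p"
    unfolding p_def using mult_mono[of 1 "1 + \<bar>real_of_int m\<bar>" 1 "1 + \<bar>real_of_int n\<bar>"] by simp
  ultimately have "q powr (- s) \<le> (p / 4) powr (- s)"
    by (intro powr_mono2') (use assms(1) in auto)
  also have "\<dots> = 4 powr s * p powr (- s)"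
    using \<open>1 \<le> p\<close> by (simp add: powr_divide powr_minus divide_simps)
  also have "p powr (- s) = (1 + real_of_int \<bar>m\<bar>) powr (- s) * (1 + real_of_int \<bar>n\<bar>) powr (- s)"
    unfolding p_def by (rule powr_mult)
  finally show ?thesis
    using kq k by simp
qed

lemma lattice_sum_le:
  assumes "1 < s" "finite F"
  shows "(\<Sum>k\<in>F - {(0,0)}. knorm k powr (- 2 * s)) \<le> lattice_const s"
proof -
  define S where "S = 2 * (\<Sum>n. (1 + real n) powr (- s))"
  define g where "g m = (1 + real_of_int \<bar>m\<bar>) powr (- s)" for m :: int
  have g: "0 \<le> g m" for m
    unfolding g_def by simp
  have "(\<Sum>k\<in>F - {(0,0)}. knorm k powr (- 2 * s)) \<le> (\<Sum>k\<in>F - {(0,0)}. 4 powr s * (g (fst k) * g (snd k)))"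
    by (rule sum_mono) (use assms knorm_powr_neg_le in \<open>auto simp: g_def\<close>)
  also have "\<dots> \<le> (\<Sum>k\<in>fst ` F \<times> snd ` F. 4 powr s * (g (fst k) * g (snd k)))"
    by (rule sum_mono2) (use assms(2) g in \<open>auto intro: rev_image_eqI\<close>)
  also have "\<dots> = 4 powr s * ((\<Sum>a\<in>fst ` F. g a) * (\<Sum>b\<in>snd ` F. g b))"
  proof -
    have "(\<Sum>a\<in>fst ` F. \<Sum>b\<in>snd ` F. g a * g b) = (\<Sum>k\<in>fst ` F \<times> snd ` F. g (fst k) * g (snd k))"
      by (simp add: sum.cartesian_product case_prod_unfold)
    then show ?thesis
      by (simp add: sum_distrib_left[symmetric] sum_product)
  qed
  also have "\<dots> \<le> 4 powr s * (S * S)"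
    unfolding S_def g_def using assms suminf_nonneg[OF summable_one_plus_powr[OF assms(1)]]
    by (intro mult_left_mono mult_mono sum_int_powr_le) (simp_all add: sum_nonneg)
  finally show ?thesis
    unfolding lattice_const_def S_def by (simp add: power2_eq_square)
qed

lemma sum_abs_le_hs_norm_real:
  assumes "1 < s" "in_Hs_real s X" "X (0,0) = 0" "finite J"
  shows "(\<Sum>k\<in>J. \<bar>X k\<bar>) \<le> sqrt (lattice_const s) * hs_norm_real s X"
proof -
  have "(\<Sum>k\<in>J. \<bar>X k\<bar>) = (\<Sum>k\<in>J - {(0,0)}. \<bar>X k\<bar>)"
    using assms(3,4) by (intro sum.mono_neutral_right) auto
  also have "\<dots> = (\<Sum>k\<in>J - {(0,0)}. \<bar>knorm k powr (- s)\<bar> * \<bar>knorm k powr s * X k\<bar>)"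
  proof (rule sum.cong[OF refl])
    fix k
    assume "k \<in> J - {(0,0)}"
    then have "knorm k powr (- s) * knorm k powr s = 1"
      using knorm_pos[of k] by (simp add: powr_minus)
    then show "\<bar>X k\<bar> = \<bar>knorm k powr (- s)\<bar> * \<bar>knorm k powr s * X k\<bar>"
      by (simp add: abs_mult mult.assoc[symmetric])
  qed
  also have "\<dots> \<le> L2_set (\<lambda>k. knorm k powr (- s)) (J - {(0,0)}) *
      L2_set (\<lambda>k. knorm k powr s * X k) (J - {(0,0)})"
    by (rule L2_set_mult_ineq)
  also have "\<dots> \<le> sqrt (lattice_const s) * hs_norm_real s X"
  proof (rule mult_mono)
    show "L2_set (\<lambda>k. knorm k powr (- s)) (J - {(0,0)}) \<le> sqrt (lattice_const s)"
      unfolding L2_set_def using lattice_sum_le[OF assms(1), of J] assms(4)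
      by (simp add: powr_square)
    show "L2_set (\<lambda>k. knorm k powr s * X k) (J - {(0,0)}) \<le> hs_norm_real s X"
      by (rule L2_set_le_hs_norm_real[OF assms(2)]) (use assms(4) in simp)
  qed simp_all
  finally show ?thesis .
qed

lemma sum_square_le_hs_norm_real:
  assumes "0 \<le> s" "in_Hs_real s X" "X (0,0) = 0" "finite J"
  shows "(\<Sum>k\<in>J. (X k)\<^sup>2) \<le> (hs_norm_real s X)\<^sup>2"
proof -
  have "(X k)\<^sup>2 \<le> knorm k powr (2 * s) * (X k)\<^sup>2" for k
  proof (cases "k = (0,0)")
    case False
    then have "1 \<le> knorm k powr (2 * s)"
      using knorm_ge_1 assms(1) by (simp add: ge_one_powr_ge_zero)
    then show ?thesis
      using mult_right_mono[of 1 _ "(X k)\<^sup>2"] by simp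
  qed (use assms(3) in simp)
  then have "(\<Sum>k\<in>J. (X k)\<^sup>2) \<le> hs_partial s X J"
    unfolding hs_partial_def by (rule sum_mono)
  also have "\<dots> \<le> (hs_norm_real s X)\<^sup>2"
    by (rule hs_partial_le[OF assms(2,4)])
  finally show ?thesis .
qed

lemma sum_weighted_square_le_hs_norm_real:
  assumes "in_Hs_real s X" "finite J"
  shows "(\<Sum>j\<in>J. (knorm j powr s * X j)\<^sup>2) \<le> (hs_norm_real s X)\<^sup>2"
  using hs_partial_le[OF assms] unfolding hs_partial_def by (simp add: power_mult_distrib powr_square)

definition rconv :: "(int \<times> int \<Rightarrow> real) \<Rightarrow> (int \<times> int \<Rightarrow> real) \<Rightarrow> int \<times> int \<Rightarrow> real" where
  "rconv X Y k = (\<Sum>\<^sub>\<infinity>j. X j * Y (idx_diff k j))"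

lemma rconv_nonneg: "(\<And>j. 0 \<le> X j) \<Longrightarrow> (\<And>j. 0 \<le> Y j) \<Longrightarrow> 0 \<le> rconv X Y k"
  unfolding rconv_def by (rule infsum_nonneg) simp

lemma rconv_commute:
  shows "rconv X Y k = rconv Y X k"
    and "(\<lambda>j. X j * Y (idx_diff k j)) summable_on UNIV \<longleftrightarrow> (\<lambda>j. Y j * X (idx_diff k j)) summable_on UNIV"
proof -
  have bij: "bij_betw (idx_diff k) UNIV UNIV"
    using bij_idx_diff by simp
  have swap: "(\<lambda>j. Y j * X (idx_diff k j)) = (\<lambda>j. (\<lambda>j. X j * Y (idx_diff k j)) (idx_diff k j))"
    by (simp add: mult.commute)
  show "rconv X Y k = rconv Y X k"
    unfolding rconv_def swap by (rule infsum_reindex_bij_betw[OF bij, symmetric])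
  show "(\<lambda>j. X j * Y (idx_diff k j)) summable_on UNIV \<longleftrightarrow> (\<lambda>j. Y j * X (idx_diff k j)) summable_on UNIV"
    unfolding swap by (rule summable_on_reindex_bij_betw[OF bij, symmetric])
qed

lemma sum_mult_le_weighted_sqrt:
  fixes X Y :: "'a \<Rightarrow> real"
  assumes "\<And>j. 0 \<le> X j" "\<And>j. 0 \<le> Y j"
  shows "(\<Sum>j\<in>J. X j * Y j) \<le> sqrt (\<Sum>j\<in>J. (X j)\<^sup>2 * Y j) * sqrt (\<Sum>j\<in>J. Y j)"
proof -
  have "(\<Sum>j\<in>J. X j * Y j) = (\<Sum>j\<in>J. \<bar>X j * sqrt (Y j)\<bar> * \<bar>sqrt (Y j)\<bar>)"
    by (rule sum.cong[OF refl]) (simp add: abs_mult assms mult.assoc)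
  also have "\<dots> \<le> L2_set (\<lambda>j. X j * sqrt (Y j)) J * L2_set (\<lambda>j. sqrt (Y j)) J"
    by (rule L2_set_mult_ineq)
  also have "\<dots> = sqrt (\<Sum>j\<in>J. (X j)\<^sup>2 * Y j) * sqrt (\<Sum>j\<in>J. Y j)"
    unfolding L2_set_def by (simp add: power_mult_distrib assms)
  finally show ?thesis .
qed

lemma rconv_square_le:
  fixes X Y :: "int \<times> int \<Rightarrow> real"
  assumes X: "\<And>j. 0 \<le> X j" and Y: "\<And>j. 0 \<le> Y j"
    and XA: "\<And>J. finite J \<Longrightarrow> (\<Sum>j\<in>J. (X j)\<^sup>2) \<le> A"
    and YB: "\<And>J. finite J \<Longrightarrow> sum Y J \<le> B"
  shows "(\<lambda>j. (X j)\<^sup>2 * Y (idx_diff k j)) summable_on UNIV"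
    and "(\<lambda>j. X j * Y (idx_diff k j)) summable_on UNIV"
    and "(rconv X Y k)\<^sup>2 \<le> (\<Sum>\<^sub>\<infinity>j. (X j)\<^sup>2 * Y (idx_diff k j)) * B"
proof -
  have B: "0 \<le> B"
    using YB[of "{}"] by simp
  have "(\<Sum>j\<in>J. (X j)\<^sup>2 * Y (idx_diff k j)) \<le> A * B" if J: "finite J" for J
  proof -
    have "(\<Sum>j\<in>J. (X j)\<^sup>2 * Y (idx_diff k j)) \<le> (\<Sum>j\<in>J. (X j)\<^sup>2) * B"
      unfolding sum_distrib_right using YB[of "{idx_diff k j}" for j]
      by (intro sum_mono mult_left_mono) simp_all
    also have "\<dots> \<le> A * B"
      by (rule mult_right_mono[OF XA[OF J] B])
    finally show ?thesis .
  qed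
  then show U: "(\<lambda>j. (X j)\<^sup>2 * Y (idx_diff k j)) summable_on UNIV"
    by (rule summable_on_nonneg_le(1)[rotated]) (auto intro!: mult_nonneg_nonneg Y)
  define U where "U = (\<Sum>\<^sub>\<infinity>j. (X j)\<^sup>2 * Y (idx_diff k j))"
  have "0 \<le> U"
    unfolding U_def by (rule infsum_nonneg) (simp add: Y mult_nonneg_nonneg)
  have partial: "(\<Sum>j\<in>J. X j * Y (idx_diff k j)) \<le> sqrt (U * B)" if J: "finite J" for J
  proof -
    have "(\<Sum>j\<in>J. X j * Y (idx_diff k j)) \<le>
        sqrt (\<Sum>j\<in>J. (X j)\<^sup>2 * Y (idx_diff k j)) * sqrt (\<Sum>j\<in>J. Y (idx_diff k j))"
      by (rule sum_mult_le_weighted_sqrt) (simp_all add: X Y)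
    also have "\<dots> \<le> sqrt U * sqrt B"
    proof (rule mult_mono)
      show "sqrt (\<Sum>j\<in>J. (X j)\<^sup>2 * Y (idx_diff k j)) \<le> sqrt U"
        unfolding U_def using J U by (intro real_sqrt_le_mono finite_sum_le_infsum) (auto intro!: mult_nonneg_nonneg Y)
      show "sqrt (\<Sum>j\<in>J. Y (idx_diff k j)) \<le> sqrt B"
        using sum_idx_diff_le(1)[OF YB J] by simp
    qed (simp_all add: \<open>0 \<le> U\<close> sum_nonneg Y)
    finally show ?thesis
      by (simp add: real_sqrt_mult)
  qed
  have nonneg: "0 \<le> X j * Y (idx_diff k j)" for j
    by (simp add: X Y)
  show "(\<lambda>j. X j * Y (idx_diff k j)) summable_on UNIV"
    by (rule summable_on_nonneg_le(1)[OF nonneg partial])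
  have "rconv X Y k \<le> sqrt (U * B)"
    unfolding rconv_def by (rule summable_on_nonneg_le(2)[OF nonneg partial])
  then show "(rconv X Y k)\<^sup>2 \<le> U * B"
    using rconv_nonneg[of X Y k] X Y power_mono[of "rconv X Y k" "sqrt (U * B)" 2] \<open>0 \<le> U\<close> B
    by simp
qed

lemma infsum_finite_sum:
  fixes f :: "'i \<Rightarrow> 'a \<Rightarrow> real"
  assumes "finite F" "\<And>i. i \<in> F \<Longrightarrow> f i summable_on A"
  shows "(\<lambda>x. \<Sum>i\<in>F. f i x) summable_on A" and "(\<Sum>\<^sub>\<infinity>x\<in>A. \<Sum>i\<in>F. f i x) = (\<Sum>i\<in>F. infsum (f i) A)"
proof -
  have "(\<lambda>x. \<Sum>i\<in>F. f i x) summable_on A \<and> (\<Sum>\<^sub>\<infinity>x\<in>A. \<Sum>i\<in>F. f i x) = (\<Sum>i\<in>F. infsum (f i) A)"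
    using assms by (induction F rule: finite_induct) (simp_all add: summable_on_add infsum_add)
  then show "(\<lambda>x. \<Sum>i\<in>F. f i x) summable_on A" and "(\<Sum>\<^sub>\<infinity>x\<in>A. \<Sum>i\<in>F. f i x) = (\<Sum>i\<in>F. infsum (f i) A)"
    by simp_all
qed

text \<open>Young's inequality: convolution maps l^2 times l^1 into l^2.\<close>

lemma L2_set_rconv_le:
  fixes X Y :: "int \<times> int \<Rightarrow> real"
  assumes X: "\<And>j. 0 \<le> X j" and Y: "\<And>j. 0 \<le> Y j"
    and XA: "\<And>J. finite J \<Longrightarrow> (\<Sum>j\<in>J. (X j)\<^sup>2) \<le> A"
    and YB: "\<And>J. finite J \<Longrightarrow> sum Y J \<le> B"
    and F: "finite F"
  shows "L2_set (rconv X Y) F \<le> sqrt A * B"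
proof -
  note pointwise = rconv_square_le[OF X Y XA YB]
  have B: "0 \<le> B"
    using YB[of "{}"] by simp
  have "(\<Sum>\<^sub>\<infinity>j. \<Sum>k\<in>F. (X j)\<^sup>2 * Y (idx_diff k j)) \<le> A * B"
  proof (rule infsum_le_finite_sums)
    show "(\<lambda>j. \<Sum>k\<in>F. (X j)\<^sup>2 * Y (idx_diff k j)) summable_on UNIV"
      by (rule infsum_finite_sum(1)[OF F pointwise(1)])
    fix J :: "(int \<times> int) set"
    assume J: "finite J"
    have "(\<Sum>j\<in>J. \<Sum>k\<in>F. (X j)\<^sup>2 * Y (idx_diff k j)) = (\<Sum>j\<in>J. (X j)\<^sup>2 * (\<Sum>k\<in>F. Y (idx_diff k j)))"
      by (simp add: sum_distrib_left)
    also have "\<dots> \<le> (\<Sum>j\<in>J. (X j)\<^sup>2) * B"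
      unfolding sum_distrib_right by (intro sum_mono mult_left_mono sum_idx_diff_le(2)[OF YB F] zero_le_power2)
    also have "\<dots> \<le> A * B"
      by (rule mult_right_mono[OF XA[OF J] B])
    finally show "(\<Sum>j\<in>J. \<Sum>k\<in>F. (X j)\<^sup>2 * Y (idx_diff k j)) \<le> A * B" .
  qed
  then have "(\<Sum>k\<in>F. \<Sum>\<^sub>\<infinity>j. (X j)\<^sup>2 * Y (idx_diff k j)) \<le> A * B"
    by (simp add: infsum_finite_sum(2)[OF F pointwise(1)])
  then have "(\<Sum>k\<in>F. (rconv X Y k)\<^sup>2) \<le> A * B * B"
    using sum_mono[of F "\<lambda>k. (rconv X Y k)\<^sup>2", OF pointwise(3)] mult_right_mono[OF _ B]
    by (simp add: sum_distrib_right[symmetric]) (meson order_trans)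
  then have "L2_set (rconv X Y) F \<le> sqrt (A * B\<^sup>2)"
    unfolding L2_set_def by (simp add: power2_eq_square mult.assoc)
  also have "\<dots> = sqrt A * B"
    using B by (simp add: real_sqrt_mult)
  finally show ?thesis .
qed

lemma weighted_rconv_le:
  fixes a b :: "int \<times> int \<Rightarrow> real" and s :: real
  defines "w \<equiv> \<lambda>j. knorm j powr s"
  assumes "0 \<le> s" and a: "\<And>j. 0 \<le> a j" and b: "\<And>j. 0 \<le> b j"
    and ab: "(\<lambda>j. a j * b (idx_diff k j)) summable_on UNIV"
    and wab: "(\<lambda>j. (w j * a j) * b (idx_diff k j)) summable_on UNIV"
    and wba: "(\<lambda>j. (w j * b j) * a (idx_diff k j)) summable_on UNIV"
  shows "w k * rconv a b k \<le> 2 powr s * (rconv (\<lambda>j. w j * a j) b k + rconv (\<lambda>j. w j * b j) a k)"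
proof -
  have awb: "(\<lambda>j. a j * (w (idx_diff k j) * b (idx_diff k j))) summable_on UNIV"
    using wba rconv_commute(2)[of "\<lambda>j. w j * b j" a k] by simp
  have "w k * rconv a b k = (\<Sum>\<^sub>\<infinity>j. w k * (a j * b (idx_diff k j)))"
    unfolding rconv_def by (rule infsum_cmult_right[symmetric, OF ab])
  also have "\<dots> \<le> (\<Sum>\<^sub>\<infinity>j. 2 powr s * ((w j * a j) * b (idx_diff k j) +
      a j * (w (idx_diff k j) * b (idx_diff k j))))"
  proof (rule infsum_mono)
    show "(\<lambda>j. w k * (a j * b (idx_diff k j))) summable_on UNIV"
      by (rule summable_on_cmult_right[OF ab])
    show "(\<lambda>j. 2 powr s * ((w j * a j) * b (idx_diff k j) + a j * (w (idx_diff k j) * b (idx_diff k j))))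
        summable_on UNIV"
      by (intro summable_on_cmult_right summable_on_add wab awb)
    fix j
    have "w k \<le> 2 powr s * (w j + w (idx_diff k j))"
      unfolding w_def by (rule knorm_powr_peetre[OF \<open>0 \<le> s\<close>])
    then have "w k * (a j * b (idx_diff k j)) \<le> 2 powr s * (w j + w (idx_diff k j)) * (a j * b (idx_diff k j))"
      by (rule mult_right_mono) (simp add: a b)
    then show "w k * (a j * b (idx_diff k j)) \<le>
        2 powr s * ((w j * a j) * b (idx_diff k j) + a j * (w (idx_diff k j) * b (idx_diff k j)))"
      by (simp add: algebra_simps)
  qed
  also have "\<dots> = 2 powr s * (rconv (\<lambda>j. w j * a j) b k + rconv a (\<lambda>j. w j * b j) k)"
    unfolding rconv_def by (simp add: infsum_cmult_right' infsum_add[OF wab awb])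
  also have "rconv a (\<lambda>j. w j * b j) k = rconv (\<lambda>j. w j * b j) a k"
    by (rule rconv_commute(1))
  finally show ?thesis .
qed

lemma hs_norm_real_rconv_le:
  fixes a b :: "int \<times> int \<Rightarrow> real"
  assumes s: "1 < s"
    and a: "\<And>j. 0 \<le> a j" "in_Hs_real s a" "a (0,0) = 0"
    and b: "\<And>j. 0 \<le> b j" "in_Hs_real s b" "b (0,0) = 0"
  shows "(\<lambda>j. a j * b (idx_diff k j)) summable_on UNIV"
    and "in_Hs_real s (rconv a b)"
    and "hs_norm_real s (rconv a b) \<le> 2 powr (s + 1) * sqrt (lattice_const s) * hs_norm_real s a * hs_norm_real s b"
proof -
  define C where "C = sqrt (lattice_const s)"
  define w where "w j = knorm j powr s" for j
  have wa: "0 \<le> w j * a j" and wb: "0 \<le> w j * b j" for j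
    by (simp_all add: w_def a b)
  have A: "\<And>J. finite J \<Longrightarrow> (\<Sum>j\<in>J. (a j)\<^sup>2) \<le> (hs_norm_real s a)\<^sup>2"
    using sum_square_le_hs_norm_real[of s a] s a by simp
  have Ba: "\<And>J. finite J \<Longrightarrow> sum a J \<le> C * hs_norm_real s a"
    and Bb: "\<And>J. finite J \<Longrightarrow> sum b J \<le> C * hs_norm_real s b"
    using sum_abs_le_hs_norm_real[OF s a(2,3)] sum_abs_le_hs_norm_real[OF s b(2,3)] a(1) b(1)
    by (simp_all add: C_def)
  have WA: "\<And>J. finite J \<Longrightarrow> (\<Sum>j\<in>J. (w j * a j)\<^sup>2) \<le> (hs_norm_real s a)\<^sup>2"
    and WB: "\<And>J. finite J \<Longrightarrow> (\<Sum>j\<in>J. (w j * b j)\<^sup>2) \<le> (hs_norm_real s b)\<^sup>2"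
    using sum_weighted_square_le_hs_norm_real[OF a(2)] sum_weighted_square_le_hs_norm_real[OF b(2)]
    by (simp_all add: w_def)
  show ab: "(\<lambda>j. a j * b (idx_diff k j)) summable_on UNIV" for k
    by (rule rconv_square_le(2)[OF a(1) b(1) A Bb])
  have "w k * rconv a b k \<le> 2 powr s * (rconv (\<lambda>j. w j * a j) b k + rconv (\<lambda>j. w j * b j) a k)" for k
    unfolding w_def using s a(1) b(1) ab
      rconv_square_le(2)[OF wa b(1) WA Bb] rconv_square_le(2)[OF wb a(1) WB Ba]
    by (intro weighted_rconv_le) (simp_all add: w_def)
  then have "L2_set (\<lambda>k. knorm k powr s * rconv a b k) F \<le>
      L2_set (\<lambda>k. 2 powr s * (rconv (\<lambda>j. w j * a j) b k + rconv (\<lambda>j. w j * b j) a k)) F" for F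
    by (intro L2_set_mono) (simp_all add: w_def rconv_nonneg a(1) b(1))
  also have "\<dots> F \<le> 2 powr s * (L2_set (rconv (\<lambda>j. w j * a j) b) F + L2_set (rconv (\<lambda>j. w j * b j) a) F)" for F
    unfolding L2_set_right_distrib[symmetric, of "2 powr s", simplified]
    by (intro mult_left_mono L2_set_triangle_ineq) simp
  also have "\<dots> F \<le> 2 powr s * (hs_norm_real s a * (C * hs_norm_real s b) + hs_norm_real s b * (C * hs_norm_real s a))"
    if "finite F" for F
    using L2_set_rconv_le[OF wa b(1) WA Bb that] L2_set_rconv_le[OF wb a(1) WB Ba that]
    by (intro mult_left_mono add_mono) simp_all
  finally have "L2_set (\<lambda>k. knorm k powr s * rconv a b k) F \<le>
      2 powr (s + 1) * C * hs_norm_real s a * hs_norm_real s b" if "finite F" for F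
    using that by (simp add: powr_add algebra_simps)
  then show "in_Hs_real s (rconv a b)"
    and "hs_norm_real s (rconv a b) \<le> 2 powr (s + 1) * sqrt (lattice_const s) * hs_norm_real s a * hs_norm_real s b"
    using hs_norm_real_L2_setI[of "2 powr (s + 1) * C * hs_norm_real s a * hs_norm_real s b" s "rconv a b"]
    by (simp_all add: C_def)
qed

section \<open>The nonlinear term\<close>

definition in_Hs0 :: "real \<Rightarrow> fcoef \<Rightarrow> bool" where
  "in_Hs0 s f \<longleftrightarrow> in_Hs s f \<and> f (0,0) = 0"

definition qg_bilin :: "real \<Rightarrow> real \<Rightarrow> fcoef \<Rightarrow> fcoef \<Rightarrow> fcoef" where
  "qg_bilin \<alpha> \<mu> a b k =
    (\<i> * of_int (fst k) * conv (\<lambda>j. - riesz2 a j) b k + \<i> * of_int (snd k) * conv (riesz1 a) b k)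
      / of_real (1 + \<mu> * knorm k powr (2 * \<alpha>))"

lemma qg_nonlin_div_eq_bilin:
  "qg_nonlin f k / of_real (1 + \<mu> * knorm k powr (2 * \<alpha>)) = qg_bilin \<alpha> \<mu> f f k"
  by (simp add: qg_nonlin_def qg_bilin_def)

lemma in_Hs0_iff_real: "in_Hs0 s f \<longleftrightarrow> in_Hs_real s (\<lambda>k. cmod (f k)) \<and> f (0,0) = 0"
  by (simp add: in_Hs0_def in_Hs_iff_real)

lemma in_Hs0_zero: "in_Hs0 s (\<lambda>k. 0)" and hs_norm_zero [simp]: "hs_norm s (\<lambda>k. 0) = 0"
  by (simp_all add: in_Hs0_def in_Hs_def hs_norm_def)

lemma in_Hs0_dominated:
  assumes "in_Hs0 s f" "in_Hs0 s g" "\<And>k. cmod (h k) \<le> cmod (f k) + cmod (g k)" "h (0,0) = 0"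
  shows "in_Hs0 s h" and "hs_norm s h \<le> hs_norm s f + hs_norm s g"
  using hs_norm_real_dominated_add[of s "\<lambda>k. cmod (f k)" "\<lambda>k. cmod (g k)" "\<lambda>k. cmod (h k)"] assms
  by (simp_all add: in_Hs0_iff_real hs_norm_eq_real)

lemma in_Hs0_diff:
  assumes "in_Hs0 s f" "in_Hs0 s g"
  shows "in_Hs0 s (\<lambda>k. f k - g k)" and "hs_norm s (\<lambda>k. f k - g k) \<le> hs_norm s f + hs_norm s g"
  using in_Hs0_dominated[OF assms, of "\<lambda>k. f k - g k"] assms
  by (simp_all add: in_Hs0_def norm_triangle_ineq4)

lemma in_Hs0_add:
  assumes "in_Hs0 s f" "in_Hs0 s g"
  shows "in_Hs0 s (\<lambda>k. f k + g k)" and "hs_norm s (\<lambda>k. f k + g k) \<le> hs_norm s f + hs_norm s g"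
  using in_Hs0_dominated[OF assms, of "\<lambda>k. f k + g k"] assms
  by (simp_all add: in_Hs0_def norm_triangle_ineq)

lemma hs_norm_diff_triangle:
  assumes "in_Hs0 s f" "in_Hs0 s g" "in_Hs0 s h"
  shows "hs_norm s (\<lambda>k. f k - h k) \<le> hs_norm s (\<lambda>k. f k - g k) + hs_norm s (\<lambda>k. g k - h k)"
  using in_Hs0_dominated[OF in_Hs0_diff(1)[OF assms(1,2)] in_Hs0_diff(1)[OF assms(2,3)], of "\<lambda>k. f k - h k"]
    norm_triangle_ineq[of "f k - g k" "g k - h k" for k] assms
  by (simp add: in_Hs0_def)

lemma hs_norm_diff_commute: "hs_norm s (\<lambda>k. f k - g k) = hs_norm s (\<lambda>k. g k - f k)"
  unfolding hs_norm_eq_real by (simp add: norm_minus_commute)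

lemma hs_norm_uminus [simp]: "hs_norm s (\<lambda>k. - f k) = hs_norm s f"
  unfolding hs_norm_eq_real by simp

lemma in_Hs0_uminus [simp]: "in_Hs0 s (\<lambda>k. - f k) \<longleftrightarrow> in_Hs0 s f"
  unfolding in_Hs0_iff_real by simp

lemma cmod_le_hs_norm:
  assumes "in_Hs0 s f" "0 \<le> s"
  shows "cmod (f k) \<le> hs_norm s f"
  using abs_le_hs_norm_real[of s "\<lambda>k. cmod (f k)" k] assms
  by (cases "k = (0,0)") (simp_all add: in_Hs0_iff_real hs_norm_eq_real)

lemma hs_norm_eq_0_imp_zero:
  assumes "in_Hs0 s f" "0 \<le> s" "hs_norm s f = 0"
  shows "f = (\<lambda>k. 0)"
  using cmod_le_hs_norm[OF assms(1,2)] assms(3) by (auto simp: fun_eq_iff)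

lemma cmod_riesz1_le: "cmod (riesz1 a j) \<le> cmod (a j)"
proof (cases "j = (0,0)")
  case False
  have "\<bar>real_of_int (fst j) / knorm j\<bar> \<le> 1"
    using abs_fst_le_knorm[of j] knorm_pos[OF False] by (simp add: abs_div divide_le_eq_1)
  then have "\<bar>real_of_int (fst j) / knorm j\<bar> * cmod (a j) \<le> 1 * cmod (a j)"
    by (intro mult_right_mono) auto
  moreover have "cmod (riesz1 a j) = \<bar>real_of_int (fst j) / knorm j\<bar> * cmod (a j)"
    unfolding riesz1_def norm_mult norm_of_real by simp
  ultimately show ?thesis
    by simp
qed (simp add: riesz1_def)

lemma cmod_riesz2_le: "cmod (- riesz2 a j) \<le> cmod (a j)"
proof (cases "j = (0,0)")
  case False
  have "\<bar>real_of_int (snd j) / knorm j\<bar> \<le> 1"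
    using abs_snd_le_knorm[of j] knorm_pos[OF False] by (simp add: abs_div divide_le_eq_1)
  then have "\<bar>real_of_int (snd j) / knorm j\<bar> * cmod (a j) \<le> 1 * cmod (a j)"
    by (intro mult_right_mono) auto
  moreover have "cmod (- riesz2 a j) = \<bar>real_of_int (snd j) / knorm j\<bar> * cmod (a j)"
    unfolding riesz2_def norm_minus_cancel norm_mult norm_of_real by simp
  ultimately show ?thesis
    by simp
qed (simp add: riesz2_def)

lemma riesz1_idx_neg: "f (idx_neg j) = cnj (f j) \<Longrightarrow> riesz1 f (idx_neg j) = cnj (riesz1 f j)"
  using knorm_idx_neg[of j] by (simp add: riesz1_def idx_neg_def)

lemma riesz2_idx_neg: "f (idx_neg j) = cnj (f j) \<Longrightarrow> - riesz2 f (idx_neg j) = cnj (- riesz2 f j)"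
  using knorm_idx_neg[of j] by (simp add: riesz2_def idx_neg_def)

lemma cmod_conv_le_rconv:
  assumes "1 < s" "in_Hs0 s a" "in_Hs0 s b" "\<And>j. cmod (c j) \<le> cmod (a j)"
  shows "(\<lambda>j. c j * b (idx_diff k j)) summable_on UNIV"
    and "cmod (conv c b k) \<le> rconv (\<lambda>j. cmod (a j)) (\<lambda>j. cmod (b j)) k"
proof -
  have ab: "(\<lambda>j. cmod (a j) * cmod (b (idx_diff k j))) summable_on UNIV"
    using hs_norm_real_rconv_le(1)[OF assms(1), of "\<lambda>j. cmod (a j)" "\<lambda>j. cmod (b j)"] assms(2,3)
    by (simp add: in_Hs0_iff_real)
  have le: "norm (c j * b (idx_diff k j)) \<le> cmod (a j) * cmod (b (idx_diff k j))" for j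
    by (simp add: norm_mult mult_right_mono assms(4))
  have n: "(\<lambda>j. norm (c j * b (idx_diff k j))) summable_on UNIV"
    using le by (intro summable_on_comparison_test[OF ab]) auto
  then show "(\<lambda>j. c j * b (idx_diff k j)) summable_on UNIV"
    by (simp add: summable_on_iff_abs_summable_on_complex)
  have "cmod (conv c b k) \<le> (\<Sum>\<^sub>\<infinity>j. norm (c j * b (idx_diff k j)))"
    unfolding conv_idx_diff by (rule norm_infsum_bound) (use n in simp)
  also have "\<dots> \<le> rconv (\<lambda>j. cmod (a j)) (\<lambda>j. cmod (b j)) k"
    unfolding rconv_def by (rule infsum_mono[OF n ab le])
  finally show "cmod (conv c b k) \<le> rconv (\<lambda>j. cmod (a j)) (\<lambda>j. cmod (b j)) k" .
qed

lemma infsum_diff_complex: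
  fixes f g :: "'a \<Rightarrow> complex"
  assumes "f summable_on A" "g summable_on A"
  shows "(\<Sum>\<^sub>\<infinity>x\<in>A. f x - g x) = infsum f A - infsum g A"
  using infsum_add[OF assms(1), of "\<lambda>x. - g x"] assms(2)
  by (simp add: summable_on_uminus infsum_uminus)

lemma conv_diff_left:
  assumes "(\<lambda>j. c j * b (idx_diff k j)) summable_on UNIV" "(\<lambda>j. c' j * b (idx_diff k j)) summable_on UNIV"
  shows "conv (\<lambda>j. c j - c' j) b k = conv c b k - conv c' b k"
  unfolding conv_idx_diff left_diff_distrib by (rule infsum_diff_complex[OF assms])

lemma conv_diff_right:
  assumes "(\<lambda>j. c j * b (idx_diff k j)) summable_on UNIV" "(\<lambda>j. c j * b' (idx_diff k j)) summable_on UNIV"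
  shows "conv c (\<lambda>j. b j - b' j) k = conv c b k - conv c b' k"
  unfolding conv_idx_diff right_diff_distrib by (rule infsum_diff_complex[OF assms])

lemma conv_idx_neg:
  assumes "\<And>j. c (idx_neg j) = cnj (c j)" "\<And>j. b (idx_neg j) = cnj (b j)"
  shows "conv c b (idx_neg k) = cnj (conv c b k)"
proof -
  have bij: "bij_betw idx_neg UNIV UNIV"
    using bij_idx_neg by simp
  have "conv c b (idx_neg k) = (\<Sum>\<^sub>\<infinity>j. c (idx_neg j) * b (idx_diff (idx_neg k) (idx_neg j)))"
    unfolding conv_idx_diff by (rule infsum_reindex_bij_betw[OF bij, symmetric])
  also have "\<dots> = (\<Sum>\<^sub>\<infinity>j. cnj (c j * b (idx_diff k j)))"
    by (simp add: idx_diff_idx_neg assms)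
  also have "\<dots> = cnj (conv c b k)"
    unfolding conv_idx_diff by (rule infsum_cnj)
  finally show ?thesis .
qed

lemma zm_real_qg_bilin:
  assumes "zm_real f"
  shows "zm_real (qg_bilin \<alpha> \<mu> f f)"
proof -
  have f: "f (idx_neg j) = cnj (f j)" for j
    using assms unfolding zm_real_iff_idx_neg by blast
  have "conv (\<lambda>j. - riesz2 f j) f (idx_neg k) = cnj (conv (\<lambda>j. - riesz2 f j) f k)"
    and "conv (riesz1 f) f (idx_neg k) = cnj (conv (riesz1 f) f k)" for k
    by (intro conv_idx_neg; simp add: riesz1_idx_neg riesz2_idx_neg f)+
  then show ?thesis
    unfolding zm_real_iff_idx_neg qg_bilin_def
    using knorm_idx_neg[unfolded idx_neg_def] by (simp add: idx_neg_def)
qed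

locale qg =
  fixes \<alpha> \<mu> s :: real
  assumes s_gt_1: "1 < s" and alpha_ge_half: "1/2 \<le> \<alpha>" and mu_pos: "0 < \<mu>"
begin

lemma s_nonneg: "0 \<le> s"
  using s_gt_1 by simp

definition bilin_const :: real where
  "bilin_const = 2 / \<mu> * (2 powr (s + 1) * sqrt (lattice_const s))"

lemma bilin_const_nonneg: "0 \<le> bilin_const"
  unfolding bilin_const_def using mu_pos by simp

text \<open>Here alpha >= 1/2 is used: the symbol of the smoothing operator dominates |k|.\<close>

lemma cmod_qg_bilin_le:
  assumes "in_Hs0 s a" "in_Hs0 s b"
  shows "cmod (qg_bilin \<alpha> \<mu> a b k) \<le> 2 / \<mu> * rconv (\<lambda>j. cmod (a j)) (\<lambda>j. cmod (b j)) k"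
proof (cases "k = (0,0)")
  case True
  then show ?thesis
    using mu_pos by (simp add: qg_bilin_def rconv_nonneg)
next
  case False
  define P where "P = rconv (\<lambda>j. cmod (a j)) (\<lambda>j. cmod (b j)) k"
  define d where "d = 1 + \<mu> * knorm k powr (2 * \<alpha>)"
  have k: "0 < knorm k"
    by (rule knorm_pos[OF False])
  have "knorm k powr 1 \<le> knorm k powr (2 * \<alpha>)"
    by (rule powr_mono) (use alpha_ge_half knorm_ge_1[OF False] in auto)
  then have "\<mu> * knorm k \<le> \<mu> * knorm k powr (2 * \<alpha>)"
    using k mu_pos by (simp add: mult_left_mono)
  then have d: "\<mu> * knorm k \<le> d"
    unfolding d_def by linarith
  then have "0 < d"
    using mult_pos_pos[OF mu_pos k] by linarith
  have "cmod (\<i> * of_int (fst k) * conv (\<lambda>j. - riesz2 a j) b k + \<i> * of_int (snd k) * conv (riesz1 a) b k)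
      \<le> \<bar>real_of_int (fst k)\<bar> * cmod (conv (\<lambda>j. - riesz2 a j) b k) +
        \<bar>real_of_int (snd k)\<bar> * cmod (conv (riesz1 a) b k)"
    by (rule order_trans[OF norm_triangle_ineq]) (simp add: norm_mult)
  also have "\<dots> \<le> knorm k * P + knorm k * P"
    unfolding P_def using s_gt_1 assms cmod_riesz1_le cmod_riesz2_le
    by (intro add_mono mult_mono abs_fst_le_knorm abs_snd_le_knorm cmod_conv_le_rconv(2)) simp_all
  finally have num: "cmod (\<i> * of_int (fst k) * conv (\<lambda>j. - riesz2 a j) b k +
      \<i> * of_int (snd k) * conv (riesz1 a) b k) \<le> 2 * (knorm k * P)"
    by (simp add: mult.commute)
  have "cmod (qg_bilin \<alpha> \<mu> a b k) = cmod (\<i> * of_int (fst k) * conv (\<lambda>j. - riesz2 a j) b k +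
      \<i> * of_int (snd k) * conv (riesz1 a) b k) / d"
    unfolding qg_bilin_def d_def[symmetric] using \<open>0 < d\<close> by (simp add: norm_divide)
  also have "\<dots> \<le> 2 * (knorm k * P) / (\<mu> * knorm k)"
    by (rule frac_le) (use num d mu_pos k in \<open>auto simp: P_def rconv_nonneg\<close>)
  also have "\<dots> = 2 / \<mu> * P"
    using k by (simp add: field_simps)
  finally show ?thesis
    unfolding P_def .
qed

lemma qg_bilin_bound:
  assumes "in_Hs0 s a" "in_Hs0 s b"
  shows "in_Hs0 s (qg_bilin \<alpha> \<mu> a b)"
    and "hs_norm s (qg_bilin \<alpha> \<mu> a b) \<le> bilin_const * hs_norm s a * hs_norm s b"
proof -
  define P where "P = rconv (\<lambda>j. cmod (a j)) (\<lambda>j. cmod (b j))"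
  have P: "in_Hs_real s P"
    "hs_norm_real s P \<le> 2 powr (s + 1) * sqrt (lattice_const s) * hs_norm s a * hs_norm s b"
    using hs_norm_real_rconv_le[OF s_gt_1, of "\<lambda>j. cmod (a j)" "\<lambda>j. cmod (b j)"] assms
    by (simp_all add: P_def in_Hs0_iff_real hs_norm_eq_real)
  have le: "\<bar>cmod (qg_bilin \<alpha> \<mu> a b k)\<bar> \<le> 2 / \<mu> * \<bar>P k\<bar>" for k
    using cmod_qg_bilin_le[OF assms, of k] rconv_nonneg[of "\<lambda>j. cmod (a j)" "\<lambda>j. cmod (b j)" k]
    by (simp add: P_def)
  note Q = hs_norm_real_dominated_scale[OF P(1) _ le]
  show "in_Hs0 s (qg_bilin \<alpha> \<mu> a b)"
    using Q(1) mu_pos by (simp add: in_Hs0_iff_real qg_bilin_def)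
  have "hs_norm s (qg_bilin \<alpha> \<mu> a b) \<le> 2 / \<mu> * hs_norm_real s P"
    using Q(2) mu_pos by (simp add: hs_norm_eq_real)
  also have "\<dots> \<le> bilin_const * hs_norm s a * hs_norm s b"
    using mult_left_mono[OF P(2), of "2 / \<mu>"] mu_pos by (simp add: bilin_const_def mult.assoc)
  finally show "hs_norm s (qg_bilin \<alpha> \<mu> a b) \<le> bilin_const * hs_norm s a * hs_norm s b" .
qed

lemma qg_bilin_diff_left:
  assumes "in_Hs0 s a" "in_Hs0 s a'" "in_Hs0 s b"
  shows "qg_bilin \<alpha> \<mu> (\<lambda>j. a j - a' j) b k = qg_bilin \<alpha> \<mu> a b k - qg_bilin \<alpha> \<mu> a' b k"
proof -
  have neg_diff: "- (c * (x - y)) = - (c * x) - - (c * y)" for c x y :: complex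
    by (simp add: algebra_simps)
  have r2: "(\<lambda>j. - riesz2 (\<lambda>j. a j - a' j) j) = (\<lambda>j. (- riesz2 a j) - (- riesz2 a' j))"
    by (rule ext) (simp only: riesz2_def neg_diff)
  have r1: "riesz1 (\<lambda>j. a j - a' j) = (\<lambda>j. riesz1 a j - riesz1 a' j)"
    by (rule ext) (simp only: riesz1_def right_diff_distrib)
  have c2: "conv (\<lambda>j. (- riesz2 a j) - (- riesz2 a' j)) b k =
      conv (\<lambda>j. - riesz2 a j) b k - conv (\<lambda>j. - riesz2 a' j) b k"
    by (rule conv_diff_left; rule cmod_conv_le_rconv(1)[OF s_gt_1 _ assms(3)];
        (rule cmod_riesz2_le)?; rule assms)
  have c1: "conv (\<lambda>j. riesz1 a j - riesz1 a' j) b k = conv (riesz1 a) b k - conv (riesz1 a') b k"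
    by (rule conv_diff_left; rule cmod_conv_le_rconv(1)[OF s_gt_1 _ assms(3)];
        (rule cmod_riesz1_le)?; rule assms)
  show ?thesis
    unfolding qg_bilin_def r1 r2 c1 c2 by (simp add: diff_divide_distrib algebra_simps)
qed

lemma qg_bilin_diff_right:
  assumes "in_Hs0 s a" "in_Hs0 s b" "in_Hs0 s b'"
  shows "qg_bilin \<alpha> \<mu> a (\<lambda>j. b j - b' j) k = qg_bilin \<alpha> \<mu> a b k - qg_bilin \<alpha> \<mu> a b' k"
proof -
  have c2: "conv (\<lambda>j. - riesz2 a j) (\<lambda>j. b j - b' j) k =
      conv (\<lambda>j. - riesz2 a j) b k - conv (\<lambda>j. - riesz2 a j) b' k"
    by (rule conv_diff_right; rule cmod_conv_le_rconv(1)[OF s_gt_1 assms(1)])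
      (use assms cmod_riesz2_le in auto)
  have c1: "conv (riesz1 a) (\<lambda>j. b j - b' j) k = conv (riesz1 a) b k - conv (riesz1 a) b' k"
    by (rule conv_diff_right; rule cmod_conv_le_rconv(1)[OF s_gt_1 assms(1)])
      (use assms cmod_riesz1_le in auto)
  show ?thesis
    unfolding qg_bilin_def c1 c2 by (simp add: diff_divide_distrib algebra_simps)
qed

text \<open>B f - B g = B (f - g) f + B g (f - g).\<close>

lemma qg_bilin_lipschitz:
  assumes "in_Hs0 s f" "in_Hs0 s g"
  shows "in_Hs0 s (\<lambda>k. qg_bilin \<alpha> \<mu> f f k - qg_bilin \<alpha> \<mu> g g k)"
    and "hs_norm s (\<lambda>k. qg_bilin \<alpha> \<mu> f f k - qg_bilin \<alpha> \<mu> g g k)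
      \<le> bilin_const * (hs_norm s f + hs_norm s g) * hs_norm s (\<lambda>k. f k - g k)"
proof -
  define d where "d = (\<lambda>k. f k - g k)"
  have d: "in_Hs0 s d"
    unfolding d_def by (rule in_Hs0_diff(1)[OF assms])
  have split: "(\<lambda>k. qg_bilin \<alpha> \<mu> f f k - qg_bilin \<alpha> \<mu> g g k) =
      (\<lambda>k. qg_bilin \<alpha> \<mu> d f k + qg_bilin \<alpha> \<mu> g d k)"
    using qg_bilin_diff_left[OF assms(1,2,1)] qg_bilin_diff_right[OF assms(2,1,2)]
    by (simp add: fun_eq_iff d_def)
  note q1 = qg_bilin_bound[OF d assms(1)] and q2 = qg_bilin_bound[OF assms(2) d]
  show "in_Hs0 s (\<lambda>k. qg_bilin \<alpha> \<mu> f f k - qg_bilin \<alpha> \<mu> g g k)"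
    unfolding split by (rule in_Hs0_add(1)[OF q1(1) q2(1)])
  have "hs_norm s (\<lambda>k. qg_bilin \<alpha> \<mu> d f k + qg_bilin \<alpha> \<mu> g d k)
      \<le> bilin_const * hs_norm s d * hs_norm s f + bilin_const * hs_norm s g * hs_norm s d"
    using in_Hs0_add(2)[OF q1(1) q2(1)] q1(2) q2(2) by linarith
  then show "hs_norm s (\<lambda>k. qg_bilin \<alpha> \<mu> f f k - qg_bilin \<alpha> \<mu> g g k)
      \<le> bilin_const * (hs_norm s f + hs_norm s g) * hs_norm s (\<lambda>k. f k - g k)"
    unfolding split d_def[symmetric] by (simp add: algebra_simps)
qed

lemma qg_bilin_lipschitz_ball:
  assumes "in_Hs0 s f" "in_Hs0 s g" "hs_norm s f \<le> \<rho>" "hs_norm s g \<le> \<rho>"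
  shows "in_Hs0 s (\<lambda>k. qg_bilin \<alpha> \<mu> f f k - qg_bilin \<alpha> \<mu> g g k)"
    and "hs_norm s (\<lambda>k. qg_bilin \<alpha> \<mu> f f k - qg_bilin \<alpha> \<mu> g g k)
      \<le> bilin_const * (2 * \<rho>) * hs_norm s (\<lambda>k. f k - g k)"
  using qg_bilin_lipschitz[OF assms(1,2)] assms(3,4) bilin_const_nonneg
    mult_right_mono[OF mult_left_mono[of "hs_norm s f + hs_norm s g" "2 * \<rho>" bilin_const]
      hs_norm_nonneg[of s "\<lambda>k. f k - g k"]]
  by simp_all

end

section \<open>Time integrals of H^s-valued paths\<close>

lemma set_integral_sum:
  fixes f :: "'i \<Rightarrow> real \<Rightarrow> complex"
  assumes "finite F" "\<And>i. i \<in> F \<Longrightarrow> set_integrable lborel A (f i)"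
  shows "set_integrable lborel A (\<lambda>x. \<Sum>i\<in>F. f i x)"
    and "(LINT x:A|lborel. \<Sum>i\<in>F. f i x) = (\<Sum>i\<in>F. LINT x:A|lborel. f i x)"
proof -
  have e: "(\<lambda>x. indicator A x *\<^sub>R (\<Sum>i\<in>F. f i x)) = (\<lambda>x. \<Sum>i\<in>F. indicator A x *\<^sub>R f i x)"
    by (simp add: scaleR_sum_right)
  have "\<And>i. i \<in> F \<Longrightarrow> integrable lborel (\<lambda>x. indicator A x *\<^sub>R f i x)"
    using assms(2) unfolding set_integrable_def by simp
  then show "set_integrable lborel A (\<lambda>x. \<Sum>i\<in>F. f i x)"
    and "(LINT x:A|lborel. \<Sum>i\<in>F. f i x) = (\<Sum>i\<in>F. LINT x:A|lborel. f i x)"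
    unfolding set_integrable_def set_lebesgue_integral_def e
    using Bochner_Integration.integral_sum[of F lborel "\<lambda>i x. indicator A x *\<^sub>R f i x"] by auto
qed

lemma set_integral_cnj: "(LINT x:A|lborel. cnj (h x)) = cnj (LINT x:A|lborel. h x)"
proof -
  have e: "(\<lambda>x. indicator A x *\<^sub>R cnj (h x)) = (\<lambda>x. cnj (indicator A x *\<^sub>R h x))"
    by (auto simp: fun_eq_iff indicator_def)
  show ?thesis
    unfolding set_lebesgue_integral_def e by (rule Bochner_Integration.integral_cnj)
qed

lemma set_integral_Icc_point: "(LINT x:{a..a::real}|lborel. h x) = (0::complex)"
  unfolding set_lebesgue_integral_def
proof (rule integral_eq_zero_AE)
  show "AE x in lborel. indicator {a..a} x *\<^sub>R h x = 0"
    using AE_lborel_singleton[of a]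
  proof eventually_elim
    fix x :: real
    assume "x \<noteq> a"
    then show "indicator {a..a} x *\<^sub>R h x = 0"
      by simp
  qed
qed

lemma set_integral_Icc_split:
  fixes h :: "real \<Rightarrow> complex"
  assumes "a \<le> c" "c \<le> b" "set_integrable lborel {a..b} h"
  shows "set_integrable lborel {a..c} h" "set_integrable lborel {c..b} h"
    and "(LINT x:{a..b}|lborel. h x) = (LINT x:{a..c}|lborel. h x) + (LINT x:{c..b}|lborel. h x)"
proof -
  show i1: "set_integrable lborel {a..c} h" and i2: "set_integrable lborel {c..b} h"
    by (rule set_integrable_subset[OF assms(3)]; use assms in auto)+
  have "AE x in lborel. \<not> (x \<in> {a..c} \<and> x \<in> {c..b})"
    using AE_lborel_singleton[of c] by (auto elim!: AE_mp)
  moreover have "{a..b} = {a..c} \<union> {c..b}"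
    using assms by auto
  ultimately show "(LINT x:{a..b}|lborel. h x) = (LINT x:{a..c}|lborel. h x) + (LINT x:{c..b}|lborel. h x)"
    using set_integral_Un_AE[OF _ _ _ i1 i2] by simp
qed

lemma set_integrable_Icc_join:
  fixes h :: "real \<Rightarrow> complex"
  assumes "a \<le> c" "c \<le> b" "set_integrable lborel {a..c} h" "set_integrable lborel {c..b} h"
  shows "set_integrable lborel {a..b} h"
proof -
  have "{a..b} = {a..c} \<union> {c..b}"
    using assms by auto
  then show ?thesis
    using set_integrable_Un[OF assms(3,4)] by simp
qed

lemma set_integral_Icc_cong:
  assumes "\<And>x. x \<in> {a..b} \<Longrightarrow> h x = h' x"
  shows "(LINT x:{a..b::real}|lborel. h x) = (LINT x:{a..b}|lborel. h' x)"
    and "set_integrable lborel {a..b} h \<longleftrightarrow> set_integrable lborel {a..b} h'"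
  using assms set_integrable_cong[of lborel lborel "{a..b}" "{a..b}" h h']
  by (auto intro!: set_lebesgue_integral_cong)

lemma set_integrable_lipschitz_Icc:
  fixes h :: "real \<Rightarrow> complex"
  assumes "\<And>x y. x \<in> {a..b} \<Longrightarrow> y \<in> {a..b} \<Longrightarrow> norm (h x - h y) \<le> L * \<bar>x - y\<bar>"
  shows "set_integrable lborel {a..b} h"
proof -
  define L' where "L' = max L 0"
  have "L'-lipschitz_on {a..b} h"
  proof (rule lipschitz_onI)
    fix x y
    assume "x \<in> {a..b}" "y \<in> {a..b}"
    then have "norm (h x - h y) \<le> L' * \<bar>x - y\<bar>"
      using assms mult_right_mono[of L L' "\<bar>x - y\<bar>"] unfolding L'_def by fastforce
    then show "dist (h x) (h y) \<le> L' * dist x y"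
      by (simp add: dist_norm dist_real_def)
  qed (simp add: L'_def)
  then show ?thesis
    unfolding set_integrable_def
    by (intro borel_integrable_compact compact_Icc lipschitz_on_continuous_on)
qed

lemma norm_set_integral_Icc_le:
  fixes h :: "real \<Rightarrow> complex"
  assumes "a \<le> b" "set_integrable lborel {a..b} h" "\<And>x. x \<in> {a..b} \<Longrightarrow> norm (h x) \<le> C"
  shows "norm (LINT x:{a..b}|lborel. h x) \<le> (b - a) * C"
proof -
  have finite: "emeasure lborel {a..b} < \<infinity>"
    by (rule emeasure_compact_finite[OF compact_Icc])
  have "norm (LINT x:{a..b}|lborel. h x) \<le> (LINT x:{a..b}|lborel. norm (h x))"
    by (rule set_integral_norm_bound[OF assms(2)])
  also have "\<dots> \<le> (LINT x:{a..b}|lborel. C)"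
  proof (rule set_integral_mono[OF set_integrable_norm[OF assms(2)]])
    show "set_integrable lborel {a..b} (\<lambda>_. C)"
      unfolding set_integrable_def by (rule integrable_indicator) (simp, rule finite)
  qed (rule assms(3))
  also have "\<dots> = (b - a) * C"
    using assms(1) finite by (simp add: set_integral_const)
  finally show ?thesis .
qed

lemma norm_hs_pairing_le:
  assumes "in_Hs s g" "finite F"
  shows "norm (\<Sum>k\<in>F. of_real (knorm k powr (2 * s)) * cnj (v k) * g k)
    \<le> L2_set (\<lambda>k. knorm k powr s * cmod (v k)) F * hs_norm s g"
proof -
  have "norm (\<Sum>k\<in>F. of_real (knorm k powr (2 * s)) * cnj (v k) * g k)
      \<le> (\<Sum>k\<in>F. norm (of_real (knorm k powr (2 * s)) * cnj (v k) * g k))"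
    by (rule norm_sum)
  also have "\<dots> = (\<Sum>k\<in>F. \<bar>knorm k powr s * cmod (v k)\<bar> * \<bar>knorm k powr s * cmod (g k)\<bar>)"
    by (intro sum.cong refl) (simp add: norm_mult abs_mult powr_add[symmetric] mult_ac)
  also have "\<dots> \<le> L2_set (\<lambda>k. knorm k powr s * cmod (v k)) F * L2_set (\<lambda>k. knorm k powr s * cmod (g k)) F"
    by (rule L2_set_mult_ineq)
  also have "\<dots> \<le> L2_set (\<lambda>k. knorm k powr s * cmod (v k)) F * hs_norm s g"
    using L2_set_le_hs_norm_real[of s "\<lambda>k. cmod (g k)" F] assms
    by (intro mult_left_mono) (simp_all add: in_Hs_iff_real hs_norm_eq_real L2_set_nonneg)
  finally show ?thesis .
qed

text \<open>
  Pairing the integral v with its own weighted coefficients gives, for every finite F,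
  S_F^2 <= (b - a) S_F K, where S_F is the weighted l^2 norm of v over F.
\<close>

lemma L2_set_set_integral_le:
  fixes g :: "real \<Rightarrow> fcoef"
  assumes ab: "a \<le> b" and int: "\<And>k. set_integrable lborel {a..b} (\<lambda>\<tau>. g \<tau> k)"
    and g: "\<And>\<tau>. \<tau> \<in> {a..b} \<Longrightarrow> in_Hs s (g \<tau>)"
    and K: "\<And>\<tau>. \<tau> \<in> {a..b} \<Longrightarrow> hs_norm s (g \<tau>) \<le> K" "0 \<le> K"
    and F: "finite F"
  shows "L2_set (\<lambda>k. knorm k powr s * cmod (LINT \<tau>:{a..b}|lborel. g \<tau> k)) F \<le> (b - a) * K"
proof -
  define v where "v k = (LINT \<tau>:{a..b}|lborel. g \<tau> k)" for k
  define w where "w k = complex_of_real (knorm k powr (2 * s)) * cnj (v k)" for k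
  define S where "S = L2_set (\<lambda>k. knorm k powr s * cmod (v k)) F"
  have "0 \<le> S"
    unfolding S_def by (rule L2_set_nonneg)
  note sum_int = set_integral_sum[OF F, of "{a..b}" "\<lambda>k \<tau>. w k * g \<tau> k"]
  have sq: "cnj z * z = complex_of_real ((cmod z)\<^sup>2)" for z
    using complex_norm_square[of z] by (simp only: mult.commute)
  have "(LINT \<tau>:{a..b}|lborel. \<Sum>k\<in>F. w k * g \<tau> k) = (\<Sum>k\<in>F. w k * v k)"
    using sum_int int by (simp add: v_def)
  also have "\<dots> = complex_of_real (S\<^sup>2)"
    unfolding S_def hs_partial_eq_L2_set[symmetric] hs_partial_def w_def of_real_sum
    by (intro sum.cong refl) (simp only: sq mult.assoc of_real_mult)
  finally have "S\<^sup>2 = norm (LINT \<tau>:{a..b}|lborel. \<Sum>k\<in>F. w k * g \<tau> k)"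
    by (simp add: norm_power)
  also have "\<dots> \<le> (b - a) * (S * K)"
  proof (rule norm_set_integral_Icc_le[OF ab])
    show "set_integrable lborel {a..b} (\<lambda>\<tau>. \<Sum>k\<in>F. w k * g \<tau> k)"
      using sum_int int by simp
    fix \<tau>
    assume \<tau>: "\<tau> \<in> {a..b}"
    have "norm (\<Sum>k\<in>F. w k * g \<tau> k) \<le> S * hs_norm s (g \<tau>)"
      using norm_hs_pairing_le[OF g[OF \<tau>] F, of v] unfolding S_def w_def by simp
    also have "\<dots> \<le> S * K"
      using K(1)[OF \<tau>] \<open>0 \<le> S\<close> by (rule mult_left_mono)
    finally show "norm (\<Sum>k\<in>F. w k * g \<tau> k) \<le> S * K" .
  qed
  finally have "S * S \<le> ((b - a) * K) * S"
    by (simp add: power2_eq_square mult_ac)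
  then have "S \<le> (b - a) * K"
    using \<open>0 \<le> S\<close> ab K(2) mult_right_le_imp_le[of S S "(b - a) * K"]
    by (cases "S = 0") simp_all
  then show ?thesis
    unfolding S_def v_def .
qed

lemma hs_norm_set_integral_le:
  fixes g :: "real \<Rightarrow> fcoef"
  assumes ab: "a \<le> b" and int: "\<And>k. set_integrable lborel {a..b} (\<lambda>\<tau>. g \<tau> k)"
    and g: "\<And>\<tau>. \<tau> \<in> {a..b} \<Longrightarrow> in_Hs0 s (g \<tau>)"
    and K: "\<And>\<tau>. \<tau> \<in> {a..b} \<Longrightarrow> hs_norm s (g \<tau>) \<le> K"
  shows "in_Hs0 s (\<lambda>k. LINT \<tau>:{a..b}|lborel. g \<tau> k)"
    and "hs_norm s (\<lambda>k. LINT \<tau>:{a..b}|lborel. g \<tau> k) \<le> (b - a) * K"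
proof -
  have "0 \<le> K"
    using order_trans[OF hs_norm_nonneg K, of a] ab by simp
  moreover have "L2_set (\<lambda>k. knorm k powr s * cmod (LINT \<tau>:{a..b}|lborel. g \<tau> k)) F \<le> (b - a) * K"
    if "finite F" for F
    using L2_set_set_integral_le[OF ab int _ K \<open>0 \<le> K\<close> that] g by (simp add: in_Hs0_def)
  ultimately have "in_Hs_real s (\<lambda>k. cmod (LINT \<tau>:{a..b}|lborel. g \<tau> k))"
    and "hs_norm_real s (\<lambda>k. cmod (LINT \<tau>:{a..b}|lborel. g \<tau> k)) \<le> (b - a) * K"
    using hs_norm_real_L2_setI[of "(b - a) * K" s] ab by simp_all
  moreover have "(LINT \<tau>:{a..b}|lborel. g \<tau> (0,0)) = (LINT \<tau>:{a..b}|lborel. 0)"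
    by (rule set_integral_Icc_cong(1)) (use g in \<open>simp add: in_Hs0_def\<close>)
  ultimately show "in_Hs0 s (\<lambda>k. LINT \<tau>:{a..b}|lborel. g \<tau> k)"
    and "hs_norm s (\<lambda>k. LINT \<tau>:{a..b}|lborel. g \<tau> k) \<le> (b - a) * K"
    by (simp_all add: in_Hs0_iff_real hs_norm_eq_real)
qed

section \<open>Picard iteration\<close>

context qg
begin

definition lip_path :: "real \<Rightarrow> real \<Rightarrow> real \<Rightarrow> real \<Rightarrow> (real \<Rightarrow> fcoef) \<Rightarrow> bool" where
  "lip_path a T \<rho> L f \<longleftrightarrow>
    (\<forall>t\<in>{a..a+T}. zm_real (f t) \<and> in_Hs0 s (f t) \<and> hs_norm s (f t) \<le> \<rho>) \<and>
    (\<forall>t\<in>{a..a+T}. \<forall>t'\<in>{a..a+T}. hs_norm s (\<lambda>k. f t k - f t' k) \<le> L * \<bar>t - t'\<bar>)"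

definition picard_map :: "real \<Rightarrow> fcoef \<Rightarrow> (real \<Rightarrow> fcoef) \<Rightarrow> real \<Rightarrow> fcoef" where
  "picard_map a x f t k = x k - (LINT \<sigma>:{a..t}|lborel. qg_bilin \<alpha> \<mu> (f \<sigma>) (f \<sigma>) k)"

lemma lip_pathD:
  assumes "lip_path a T \<rho> L f" "t \<in> {a..a+T}"
  shows "zm_real (f t)" "in_Hs0 s (f t)" "hs_norm s (f t) \<le> \<rho>"
  using assms unfolding lip_path_def by auto

lemma lip_path_lipschitz:
  assumes "lip_path a T \<rho> L f" "t \<in> {a..a+T}" "t' \<in> {a..a+T}"
  shows "hs_norm s (\<lambda>k. f t k - f t' k) \<le> L * \<bar>t - t'\<bar>"
  using assms unfolding lip_path_def by auto

lemma lip_path_radius_nonneg: "lip_path a T \<rho> L f \<Longrightarrow> t \<in> {a..a+T} \<Longrightarrow> 0 \<le> \<rho>"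
  using lip_pathD(3) hs_norm_nonneg order_trans by blast

lemma qg_bilin_path_bound:
  assumes "lip_path a T \<rho> L f" "\<sigma> \<in> {a..a+T}"
  shows "in_Hs0 s (qg_bilin \<alpha> \<mu> (f \<sigma>) (f \<sigma>))" and "hs_norm s (qg_bilin \<alpha> \<mu> (f \<sigma>) (f \<sigma>)) \<le> bilin_const * \<rho>\<^sup>2"
proof -
  note f = lip_pathD[OF assms]
  show "in_Hs0 s (qg_bilin \<alpha> \<mu> (f \<sigma>) (f \<sigma>))"
    by (rule qg_bilin_bound(1)[OF f(2) f(2)])
  have "bilin_const * hs_norm s (f \<sigma>) * hs_norm s (f \<sigma>) \<le> bilin_const * \<rho> * \<rho>"
    using f(3) bilin_const_nonneg lip_path_radius_nonneg[OF assms] by (intro mult_mono mult_left_mono) simp_all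
  then show "hs_norm s (qg_bilin \<alpha> \<mu> (f \<sigma>) (f \<sigma>)) \<le> bilin_const * \<rho>\<^sup>2"
    using qg_bilin_bound(2)[OF f(2) f(2)] by (simp add: power2_eq_square)
qed

lemma qg_bilin_path_integrable:
  assumes f: "lip_path a T \<rho> L f" and "a \<le> t'" "t \<le> a + T"
  shows "set_integrable lborel {t'..t} (\<lambda>\<sigma>. qg_bilin \<alpha> \<mu> (f \<sigma>) (f \<sigma>) k)"
proof (rule set_integrable_lipschitz_Icc)
  fix x y
  assume "x \<in> {t'..t}" "y \<in> {t'..t}"
  then have x: "x \<in> {a..a+T}" and y: "y \<in> {a..a+T}"
    using assms by auto
  note diff = qg_bilin_lipschitz_ball[OF lip_pathD(2)[OF f x] lip_pathD(2)[OF f y]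
      lip_pathD(3)[OF f x] lip_pathD(3)[OF f y]]
  have "cmod (qg_bilin \<alpha> \<mu> (f x) (f x) k - qg_bilin \<alpha> \<mu> (f y) (f y) k)
      \<le> hs_norm s (\<lambda>k. qg_bilin \<alpha> \<mu> (f x) (f x) k - qg_bilin \<alpha> \<mu> (f y) (f y) k)"
    by (rule cmod_le_hs_norm[OF diff(1) s_nonneg])
  also have "\<dots> \<le> bilin_const * (2 * \<rho>) * (L * \<bar>x - y\<bar>)"
    using diff(2) lip_path_lipschitz[OF f x y] bilin_const_nonneg lip_path_radius_nonneg[OF f x]
    by (meson mult_left_mono order_trans zero_le_mult_iff zero_le_numeral)
  finally show "cmod (qg_bilin \<alpha> \<mu> (f x) (f x) k - qg_bilin \<alpha> \<mu> (f y) (f y) k)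
      \<le> bilin_const * (2 * \<rho>) * L * \<bar>x - y\<bar>"
    by (simp add: mult.assoc)
qed

lemma hs_norm_integral_bilin_le:
  assumes f: "lip_path a T \<rho> L f" and "a \<le> t'" "t' \<le> t" "t \<le> a + T"
  shows "in_Hs0 s (\<lambda>k. LINT \<sigma>:{t'..t}|lborel. qg_bilin \<alpha> \<mu> (f \<sigma>) (f \<sigma>) k)"
    and "hs_norm s (\<lambda>k. LINT \<sigma>:{t'..t}|lborel. qg_bilin \<alpha> \<mu> (f \<sigma>) (f \<sigma>) k) \<le> (t - t') * (bilin_const * \<rho>\<^sup>2)"
  using hs_norm_set_integral_le[OF \<open>t' \<le> t\<close> qg_bilin_path_integrable[OF f \<open>a \<le> t'\<close> \<open>t \<le> a + T\<close>]
      qg_bilin_path_bound(1)[OF f] qg_bilin_path_bound(2)[OF f]] assms(2-4)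
  by auto

lemma picard_map_zm_real:
  assumes f: "lip_path a T \<rho> L f" and t: "t \<in> {a..a+T}" and x: "zm_real x"
  shows "zm_real (picard_map a x f t)"
  unfolding zm_real_iff_idx_neg
proof (intro conjI allI)
  have sub: "\<sigma> \<in> {a..t} \<Longrightarrow> \<sigma> \<in> {a..a+T}" for \<sigma>
    using t by auto
  have "(LINT \<sigma>:{a..t}|lborel. qg_bilin \<alpha> \<mu> (f \<sigma>) (f \<sigma>) (0,0)) = (LINT \<sigma>:{a..t}|lborel. 0)"
    by (rule set_integral_Icc_cong(1)) (use qg_bilin_path_bound(1)[OF f sub] in \<open>simp add: in_Hs0_def\<close>)
  then show "picard_map a x f t (0, 0) = 0"
    using x by (simp add: picard_map_def zm_real_iff_idx_neg)
  fix k
  have "(LINT \<sigma>:{a..t}|lborel. qg_bilin \<alpha> \<mu> (f \<sigma>) (f \<sigma>) (idx_neg k)) =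
      (LINT \<sigma>:{a..t}|lborel. cnj (qg_bilin \<alpha> \<mu> (f \<sigma>) (f \<sigma>) k))"
  proof (rule set_integral_Icc_cong(1))
    fix \<sigma>
    assume "\<sigma> \<in> {a..t}"
    then have "zm_real (qg_bilin \<alpha> \<mu> (f \<sigma>) (f \<sigma>))"
      using zm_real_qg_bilin lip_pathD(1)[OF f sub] by blast
    then show "qg_bilin \<alpha> \<mu> (f \<sigma>) (f \<sigma>) (idx_neg k) = cnj (qg_bilin \<alpha> \<mu> (f \<sigma>) (f \<sigma>) k)"
      unfolding zm_real_iff_idx_neg by blast
  qed
  moreover have "x (idx_neg k) = cnj (x k)"
    using x unfolding zm_real_iff_idx_neg by blast
  ultimately show "picard_map a x f t (idx_neg k) = cnj (picard_map a x f t k)"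
    unfolding picard_map_def by (simp add: set_integral_cnj)
qed

lemma picard_map_minus:
  assumes f: "lip_path a T \<rho> L f" and "a \<le> t'" "t' \<le> t" "t \<le> a + T"
  shows "(\<lambda>k. picard_map a x f t k - picard_map a x f t' k) =
    (\<lambda>k. - (LINT \<sigma>:{t'..t}|lborel. qg_bilin \<alpha> \<mu> (f \<sigma>) (f \<sigma>) k))"
  using set_integral_Icc_split(3)[OF assms(2,3) qg_bilin_path_integrable[OF f order_refl assms(4)]]
  by (simp add: picard_map_def fun_eq_iff)

lemma picard_map_near:
  assumes f: "lip_path a T \<rho> L f" and t: "t \<in> {a..a+T}" and x: "in_Hs0 s x"
  shows "in_Hs0 s (picard_map a x f t)"
    and "hs_norm s (\<lambda>k. picard_map a x f t k - x k) \<le> (t - a) * (bilin_const * \<rho>\<^sup>2)"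
proof -
  note I = hs_norm_integral_bilin_le[OF f order_refl, of t]
  show "in_Hs0 s (picard_map a x f t)"
    using in_Hs0_diff(1)[OF x I(1)] t unfolding picard_map_def[abs_def] by simp
  show "hs_norm s (\<lambda>k. picard_map a x f t k - x k) \<le> (t - a) * (bilin_const * \<rho>\<^sup>2)"
    using I(2) t by (simp add: picard_map_def)
qed

lemma picard_map_lip_path:
  assumes f: "lip_path a T \<rho> L f" and x: "in_Hs0 s x" "zm_real x" "hs_norm s x \<le> R"
    and radius: "R + T * (bilin_const * \<rho>\<^sup>2) \<le> \<rho>" and lip: "bilin_const * \<rho>\<^sup>2 \<le> L"
  shows "lip_path a T \<rho> L (picard_map a x f)"
  unfolding lip_path_def
proof (intro conjI ballI)
  fix t
  assume t: "t \<in> {a..a+T}"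
  note near = picard_map_near[OF f t x(1)]
  show "zm_real (picard_map a x f t)"
    by (rule picard_map_zm_real[OF f t x(2)])
  show "in_Hs0 s (picard_map a x f t)"
    by (rule near(1))
  have "hs_norm s (picard_map a x f t) \<le> hs_norm s (\<lambda>k. picard_map a x f t k - x k) + hs_norm s x"
    using in_Hs0_add(2)[OF in_Hs0_diff(1)[OF near(1) x(1)] x(1)] by simp
  also have "\<dots> \<le> T * (bilin_const * \<rho>\<^sup>2) + R"
    using near(2) x(3) t bilin_const_nonneg mult_right_mono[of "t - a" T "bilin_const * \<rho>\<^sup>2"] by simp
  finally show "hs_norm s (picard_map a x f t) \<le> \<rho>"
    using radius by linarith
next
  have le: "hs_norm s (\<lambda>k. picard_map a x f t k - picard_map a x f t' k) \<le> L * \<bar>t - t'\<bar>"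
    if t: "t \<in> {a..a+T}" and t': "t' \<in> {a..a+T}" and "t' \<le> t" for t t'
  proof -
    have "hs_norm s (\<lambda>k. picard_map a x f t k - picard_map a x f t' k) \<le> (t - t') * (bilin_const * \<rho>\<^sup>2)"
      using picard_map_minus[OF f _ \<open>t' \<le> t\<close>] hs_norm_integral_bilin_le(2)[OF f _ \<open>t' \<le> t\<close>] t t' by simp
    also have "\<dots> \<le> (t - t') * L"
      using \<open>t' \<le> t\<close> lip by (intro mult_left_mono) auto
    finally show ?thesis
      using \<open>t' \<le> t\<close> by (simp add: mult.commute)
  qed
  fix t t'
  assume "t \<in> {a..a+T}" "t' \<in> {a..a+T}"
  then show "hs_norm s (\<lambda>k. picard_map a x f t k - picard_map a x f t' k) \<le> L * \<bar>t - t'\<bar>"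
    using le[of t t'] le[of t' t] hs_norm_diff_commute[of s "picard_map a x f t"]
    by (cases "t' \<le> t") (simp_all add: abs_minus_commute)
qed


lemma hs_norm_integral_bilin_diff_le:
  assumes "a \<le> t"
    and int: "\<And>k. set_integrable lborel {a..t} (\<lambda>\<sigma>. qg_bilin \<alpha> \<mu> (f \<sigma>) (f \<sigma>) k)"
      "\<And>k. set_integrable lborel {a..t} (\<lambda>\<sigma>. qg_bilin \<alpha> \<mu> (g \<sigma>) (g \<sigma>) k)"
    and fg: "\<And>\<sigma>. \<sigma> \<in> {a..t} \<Longrightarrow> in_Hs0 s (f \<sigma>)" "\<And>\<sigma>. \<sigma> \<in> {a..t} \<Longrightarrow> in_Hs0 s (g \<sigma>)"
      "\<And>\<sigma>. \<sigma> \<in> {a..t} \<Longrightarrow> hs_norm s (f \<sigma>) \<le> \<rho>" "\<And>\<sigma>. \<sigma> \<in> {a..t} \<Longrightarrow> hs_norm s (g \<sigma>) \<le> \<rho>"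
    and D: "\<And>\<sigma>. \<sigma> \<in> {a..t} \<Longrightarrow> hs_norm s (\<lambda>k. f \<sigma> k - g \<sigma> k) \<le> D"
  shows "in_Hs0 s (\<lambda>k. LINT \<sigma>:{a..t}|lborel. qg_bilin \<alpha> \<mu> (f \<sigma>) (f \<sigma>) k - qg_bilin \<alpha> \<mu> (g \<sigma>) (g \<sigma>) k)"
    and "hs_norm s (\<lambda>k. LINT \<sigma>:{a..t}|lborel. qg_bilin \<alpha> \<mu> (f \<sigma>) (f \<sigma>) k - qg_bilin \<alpha> \<mu> (g \<sigma>) (g \<sigma>) k)
      \<le> (t - a) * (bilin_const * (2 * \<rho>) * D)"
proof -
  have int_diff: "set_integrable lborel {a..t}
      (\<lambda>\<sigma>. qg_bilin \<alpha> \<mu> (f \<sigma>) (f \<sigma>) k - qg_bilin \<alpha> \<mu> (g \<sigma>) (g \<sigma>) k)" for k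
    using int by simp
  have H: "in_Hs0 s (\<lambda>k. qg_bilin \<alpha> \<mu> (f \<sigma>) (f \<sigma>) k - qg_bilin \<alpha> \<mu> (g \<sigma>) (g \<sigma>) k)"
    and N: "hs_norm s (\<lambda>k. qg_bilin \<alpha> \<mu> (f \<sigma>) (f \<sigma>) k - qg_bilin \<alpha> \<mu> (g \<sigma>) (g \<sigma>) k)
      \<le> bilin_const * (2 * \<rho>) * D"
    if \<sigma>: "\<sigma> \<in> {a..t}" for \<sigma>
  proof -
    note lip = qg_bilin_lipschitz_ball[OF fg(1-4)[OF \<sigma>]]
    show "in_Hs0 s (\<lambda>k. qg_bilin \<alpha> \<mu> (f \<sigma>) (f \<sigma>) k - qg_bilin \<alpha> \<mu> (g \<sigma>) (g \<sigma>) k)"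
      by (rule lip(1))
    have "0 \<le> bilin_const * (2 * \<rho>)"
      using bilin_const_nonneg order_trans[OF hs_norm_nonneg fg(3)[OF \<sigma>]] by simp
    then show "hs_norm s (\<lambda>k. qg_bilin \<alpha> \<mu> (f \<sigma>) (f \<sigma>) k - qg_bilin \<alpha> \<mu> (g \<sigma>) (g \<sigma>) k)
        \<le> bilin_const * (2 * \<rho>) * D"
      using lip(2) D[OF \<sigma>] by (meson mult_left_mono order_trans)
  qed
  show "in_Hs0 s (\<lambda>k. LINT \<sigma>:{a..t}|lborel. qg_bilin \<alpha> \<mu> (f \<sigma>) (f \<sigma>) k - qg_bilin \<alpha> \<mu> (g \<sigma>) (g \<sigma>) k)"
    and "hs_norm s (\<lambda>k. LINT \<sigma>:{a..t}|lborel. qg_bilin \<alpha> \<mu> (f \<sigma>) (f \<sigma>) k - qg_bilin \<alpha> \<mu> (g \<sigma>) (g \<sigma>) k)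
      \<le> (t - a) * (bilin_const * (2 * \<rho>) * D)"
    using hs_norm_set_integral_le[OF \<open>a \<le> t\<close> int_diff H N] by simp_all
qed

lemma picard_map_diff:
  assumes f: "lip_path a T \<rho> L f" and g: "lip_path a T \<rho> L' g" and t: "t \<in> {a..a+T}"
    and D: "\<And>\<sigma>. \<sigma> \<in> {a..a+T} \<Longrightarrow> hs_norm s (\<lambda>k. f \<sigma> k - g \<sigma> k) \<le> D"
  shows "in_Hs0 s (\<lambda>k. picard_map a x f t k - picard_map a x g t k)"
    and "hs_norm s (\<lambda>k. picard_map a x f t k - picard_map a x g t k) \<le> (t - a) * (bilin_const * (2 * \<rho>) * D)"
proof -
  have sub: "\<sigma> \<in> {a..t} \<Longrightarrow> \<sigma> \<in> {a..a+T}" for \<sigma>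
    using t by auto
  note int_f = qg_bilin_path_integrable[OF f order_refl, of t] and
    int_g = qg_bilin_path_integrable[OF g order_refl, of t]
  have eq: "(\<lambda>k. picard_map a x f t k - picard_map a x g t k) = (\<lambda>k. - (LINT \<sigma>:{a..t}|lborel.
      qg_bilin \<alpha> \<mu> (f \<sigma>) (f \<sigma>) k - qg_bilin \<alpha> \<mu> (g \<sigma>) (g \<sigma>) k))"
    using int_f int_g t by (simp add: picard_map_def fun_eq_iff)
  note I = hs_norm_integral_bilin_diff_le[of a t f g \<rho> D, OF _ int_f int_g
      lip_pathD(2)[OF f sub] lip_pathD(2)[OF g sub] lip_pathD(3)[OF f sub] lip_pathD(3)[OF g sub] D[OF sub]]
  show "in_Hs0 s (\<lambda>k. picard_map a x f t k - picard_map a x g t k)"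
    and "hs_norm s (\<lambda>k. picard_map a x f t k - picard_map a x g t k) \<le> (t - a) * (bilin_const * (2 * \<rho>) * D)"
    unfolding eq using I t by simp_all
qed

lemma picard_map_tendsto:
  assumes fn: "\<And>n. lip_path a T \<rho> L (f n)" and f: "lip_path a T \<rho> L g" and t: "t \<in> {a..a+T}"
    and e: "e \<longlonglongrightarrow> 0" and en: "\<And>n \<sigma>. \<sigma> \<in> {a..a+T} \<Longrightarrow> hs_norm s (\<lambda>k. f n \<sigma> k - g \<sigma> k) \<le> e n"
  shows "(\<lambda>n. picard_map a x (f n) t k) \<longlonglongrightarrow> picard_map a x g t k"
proof -
  have bound: "norm (picard_map a x (f n) t k - picard_map a x g t k) \<le> (t - a) * (bilin_const * (2 * \<rho>) * e n)" for n
    using cmod_le_hs_norm[OF picard_map_diff(1)[OF fn[of n] f t en[where n=n], where x=x] s_nonneg, of k]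
      picard_map_diff(2)[OF fn[of n] f t en[where n=n], where x=x] by simp
  have "(\<lambda>n. (t - a) * (bilin_const * (2 * \<rho>) * e n)) \<longlonglongrightarrow> 0"
    by (intro tendsto_mult_right_zero e)
  then have "(\<lambda>n. picard_map a x (f n) t k - picard_map a x g t k) \<longlonglongrightarrow> 0"
    by (rule Lim_null_comparison[rotated]) (use bound in simp)
  then show ?thesis
    by (simp add: LIM_zero_iff)
qed

definition local_time :: "real \<Rightarrow> real" where
  "local_time R = 1 / (4 * (bilin_const + 1) * (2 * (R + 1)))"

lemma local_time_pos: "0 \<le> R \<Longrightarrow> 0 < local_time R"
  unfolding local_time_def using bilin_const_nonneg by simp

lemma local_time_contraction:
  assumes "0 \<le> R" "0 \<le> \<rho>" "\<rho> \<le> 2 * (R + 1)" "0 \<le> D"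
  shows "local_time R * (bilin_const * (2 * \<rho>) * D) \<le> D / 2"
proof -
  define c where "c = (bilin_const + 1) * (R + 1)"
  have "0 < c"
    unfolding c_def using assms(1) bilin_const_nonneg by simp
  have "local_time R * (bilin_const * (2 * \<rho>) * D) \<le> local_time R * ((bilin_const + 1) * (2 * (2 * (R + 1))) * D)"
    using assms local_time_pos[OF assms(1)] bilin_const_nonneg
    by (intro mult_left_mono mult_right_mono mult_mono) simp_all
  also have "\<dots> = 1 / (8 * c) * (4 * c * D)"
    unfolding local_time_def c_def by (simp add: algebra_simps)
  also have "\<dots> = D / 2"
    using \<open>0 < c\<close> by simp
  finally show ?thesis .
qed

end

locale qg_picard = qg +
  fixes a R :: real and x :: fcoef
  assumes x_Hs0: "in_Hs0 s x" and x_zm_real: "zm_real x" and x_le: "hs_norm s x \<le> R"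
    and R_nonneg: "0 \<le> R"
begin

definition radius :: real where
  "radius = 2 * (R + 1)"

definition lip_const :: real where
  "lip_const = (bilin_const + 1) * radius\<^sup>2"

definition picard_iter :: "nat \<Rightarrow> real \<Rightarrow> fcoef" where
  "picard_iter n = (picard_map a x ^^ n) (\<lambda>_. x)"

lemma picard_iter_0: "picard_iter 0 = (\<lambda>_. x)"
  and picard_iter_Suc: "picard_iter (Suc n) = picard_map a x (picard_iter n)"
  by (simp_all add: picard_iter_def)

lemma radius_pos: "0 < radius"
  unfolding radius_def using R_nonneg by simp

lemma local_time_radius_contraction: "0 \<le> D \<Longrightarrow> local_time R * (bilin_const * (2 * radius) * D) \<le> D / 2"
  using local_time_contraction[OF R_nonneg, of radius D] radius_pos unfolding radius_def by simp

lemma radius_bound: "R + local_time R * (bilin_const * radius\<^sup>2) \<le> radius"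
  using local_time_radius_contraction[of radius] radius_pos unfolding radius_def
  by (simp add: power2_eq_square algebra_simps)

lemma picard_iter_lip_path: "lip_path a (local_time R) radius lip_const (picard_iter n)"
proof (induction n)
  case 0
  have "0 \<le> local_time R * (bilin_const * radius\<^sup>2)"
    using local_time_pos[OF R_nonneg] bilin_const_nonneg by simp
  then have "hs_norm s x \<le> radius"
    using x_le radius_bound by linarith
  then show ?case
    unfolding lip_path_def picard_iter_0 lip_const_def
    using x_Hs0 x_zm_real in_Hs0_zero bilin_const_nonneg by simp
next
  case (Suc n)
  show ?case
    unfolding picard_iter_Suc using bilin_const_nonneg
    by (intro picard_map_lip_path[OF Suc x_Hs0 x_zm_real x_le radius_bound])
      (simp add: lip_const_def mult_right_mono)
qed

lemma picard_iter_Hs0: "t \<in> {a..a + local_time R} \<Longrightarrow> in_Hs0 s (picard_iter n t)"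
  by (rule lip_pathD(2)[OF picard_iter_lip_path])

lemma picard_iter_step_le:
  assumes t: "t \<in> {a..a + local_time R}"
  shows "hs_norm s (\<lambda>k. picard_iter (Suc n) t k - picard_iter n t k) \<le> radius * (1/2)^n"
  using t
proof (induction n arbitrary: t)
  case 0
  have "hs_norm s (\<lambda>k. picard_iter (Suc 0) t k - picard_iter 0 t k) \<le> (t - a) * (bilin_const * radius\<^sup>2)"
    using picard_map_near(2)[OF picard_iter_lip_path[of 0] 0 x_Hs0] by (simp add: picard_iter_Suc picard_iter_0)
  also have "\<dots> \<le> local_time R * (bilin_const * radius\<^sup>2)"
    using 0 bilin_const_nonneg by (intro mult_right_mono) simp_all
  finally show ?case
    using radius_bound R_nonneg by simp
next
  case (Suc n)
  have "hs_norm s (\<lambda>k. picard_iter (Suc (Suc n)) t k - picard_iter (Suc n) t k)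
      \<le> (t - a) * (bilin_const * (2 * radius) * (radius * (1/2)^n))"
    unfolding picard_iter_Suc[of "Suc n"] picard_iter_Suc[of n]
    using picard_map_diff(2)[OF picard_iter_lip_path picard_iter_lip_path Suc.prems Suc.IH]
    by (simp add: picard_iter_Suc)
  also have "\<dots> \<le> local_time R * (bilin_const * (2 * radius) * (radius * (1/2)^n))"
    using Suc.prems bilin_const_nonneg radius_pos by (intro mult_right_mono) simp_all
  also have "\<dots> \<le> radius * (1/2)^n / 2"
    using radius_pos by (intro local_time_radius_contraction) simp
  finally show ?case
    by simp
qed

lemma picard_iter_cauchy:
  assumes t: "t \<in> {a..a + local_time R}"
  shows "hs_norm s (\<lambda>k. picard_iter (m + n) t k - picard_iter n t k) \<le> 2 * radius * (1/2)^n"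
proof -
  have "hs_norm s (\<lambda>k. picard_iter (m + n) t k - picard_iter n t k)
      \<le> 2 * radius * (1/2)^n - 2 * radius * (1/2)^(m + n)"
  proof (induction m)
    case (Suc m)
    have "hs_norm s (\<lambda>k. picard_iter (Suc m + n) t k - picard_iter n t k)
        \<le> hs_norm s (\<lambda>k. picard_iter (Suc (m + n)) t k - picard_iter (m + n) t k)
          + hs_norm s (\<lambda>k. picard_iter (m + n) t k - picard_iter n t k)"
      using hs_norm_diff_triangle[OF picard_iter_Hs0[OF t] picard_iter_Hs0[OF t] picard_iter_Hs0[OF t]]
      by simp
    also have "\<dots> \<le> 2 * radius * (1/2)^n - 2 * radius * (1/2)^(Suc m + n)"
      using picard_iter_step_le[OF t, of "m + n"] Suc.IH by simp
    finally show ?case .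
  qed simp
  moreover have "0 \<le> 2 * radius * (1/2)^(m + n)"
    using radius_pos by simp
  ultimately show ?thesis
    by linarith
qed

definition picard_limit :: "real \<Rightarrow> fcoef" where
  "picard_limit t k = x k + (\<Sum>i. picard_iter (Suc i) t k - picard_iter i t k)"

lemma picard_iter_tendsto:
  assumes t: "t \<in> {a..a + local_time R}"
  shows "(\<lambda>n. picard_iter n t k) \<longlonglongrightarrow> picard_limit t k"
proof -
  define d where "d i = picard_iter (Suc i) t k - picard_iter i t k" for i
  have bound: "norm (d i) \<le> radius * (1/2)^i" for i
  proof -
    have "norm (d i) \<le> hs_norm s (\<lambda>k. picard_iter (Suc i) t k - picard_iter i t k)"
      unfolding d_def
      by (rule cmod_le_hs_norm[OF in_Hs0_diff(1)[OF picard_iter_Hs0[OF t] picard_iter_Hs0[OF t]] s_nonneg])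
    also have "\<dots> \<le> radius * (1/2)^i"
      by (rule picard_iter_step_le[OF t])
    finally show ?thesis .
  qed
  have "summable d"
  proof (rule summable_comparison_test')
    show "summable (\<lambda>i. radius * (1/2::real)^i)"
      by (intro summable_mult summable_geometric) simp
  qed (rule bound)
  then have "(\<lambda>n. x k + (\<Sum>i<n. d i)) \<longlonglongrightarrow> picard_limit t k"
    unfolding picard_limit_def d_def[symmetric] by (intro tendsto_add tendsto_const summable_LIMSEQ)
  moreover have "picard_iter n t k = x k + (\<Sum>i<n. d i)" for n
    by (induction n) (simp_all add: picard_iter_0 d_def)
  ultimately show ?thesis
    by simp
qed

lemma picard_limit_tail:
  assumes t: "t \<in> {a..a + local_time R}"
  shows "hs_norm s (\<lambda>k. picard_iter n t k - picard_limit t k) \<le> 2 * radius * (1/2)^n"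
proof -
  have lim: "(\<lambda>m. cmod (picard_iter (m + n) t k - picard_iter n t k)) \<longlonglongrightarrow>
      cmod (picard_limit t k - picard_iter n t k)" for k
    using LIMSEQ_ignore_initial_segment[OF picard_iter_tendsto[OF t], where k=n] by (intro tendsto_intros)
  have "in_Hs_real s (\<lambda>k. cmod (picard_iter (m + n) t k - picard_iter n t k))" for m
    using in_Hs0_diff(1)[OF picard_iter_Hs0[OF t] picard_iter_Hs0[OF t]] by (simp add: in_Hs0_iff_real)
  from hs_norm_real_limit(2)[OF lim this] picard_iter_cauchy[OF t]
  have "hs_norm s (\<lambda>k. picard_limit t k - picard_iter n t k) \<le> 2 * radius * (1/2)^n"
    by (simp add: hs_norm_eq_real)
  then show ?thesis
    by (simp add: hs_norm_diff_commute)
qed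

lemma picard_limit_lip_path: "lip_path a (local_time R) radius lip_const picard_limit"
  unfolding lip_path_def
proof (intro conjI ballI)
  fix t
  assume t: "t \<in> {a..a + local_time R}"
  note lim = picard_iter_tendsto[OF t] and iter = lip_pathD[OF picard_iter_lip_path t]
  have "picard_iter n t (0,0) = 0" and "picard_iter n t (idx_neg k) = cnj (picard_iter n t k)" for n k
    using iter(1)[of n] unfolding zm_real_iff_idx_neg by blast+
  then have "(\<lambda>n. picard_iter n t (0,0)) \<longlonglongrightarrow> 0" and
    "(\<lambda>n. picard_iter n t (idx_neg k)) \<longlonglongrightarrow> cnj (picard_limit t k)" for k
    using tendsto_cnj[OF lim] by simp_all
  then show "zm_real (picard_limit t)"
    unfolding zm_real_iff_idx_neg using lim LIMSEQ_unique by blast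
  have lim_cmod: "(\<lambda>n. cmod (picard_iter n t k)) \<longlonglongrightarrow> cmod (picard_limit t k)" for k
    by (intro tendsto_intros lim)
  have "in_Hs_real s (\<lambda>k. cmod (picard_iter n t k))" "hs_norm_real s (\<lambda>k. cmod (picard_iter n t k)) \<le> radius"
    for n
    using iter(2,3) by (simp_all add: in_Hs0_iff_real hs_norm_eq_real)
  note bound = hs_norm_real_limit[of "\<lambda>n k. cmod (picard_iter n t k)", OF lim_cmod this]
  show "in_Hs0 s (picard_limit t)" and "hs_norm s (picard_limit t) \<le> radius"
    using bound \<open>zm_real (picard_limit t)\<close> by (simp_all add: in_Hs0_iff_real hs_norm_eq_real zm_real_def)
next
  fix t t'
  assume t: "t \<in> {a..a + local_time R}" and t': "t' \<in> {a..a + local_time R}"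
  have lim_cmod: "(\<lambda>n. cmod (picard_iter n t k - picard_iter n t' k)) \<longlonglongrightarrow>
      cmod (picard_limit t k - picard_limit t' k)" for k
    by (intro tendsto_intros picard_iter_tendsto t t')
  have "in_Hs_real s (\<lambda>k. cmod (picard_iter n t k - picard_iter n t' k))"
    "hs_norm_real s (\<lambda>k. cmod (picard_iter n t k - picard_iter n t' k)) \<le> lip_const * \<bar>t - t'\<bar>" for n
    using in_Hs0_diff(1)[OF picard_iter_Hs0[OF t] picard_iter_Hs0[OF t']]
      lip_path_lipschitz[OF picard_iter_lip_path t t']
    by (simp_all add: in_Hs0_iff_real hs_norm_eq_real)
  from hs_norm_real_limit(2)[of "\<lambda>n k. cmod (picard_iter n t k - picard_iter n t' k)", OF lim_cmod this]
  show "hs_norm s (\<lambda>k. picard_limit t k - picard_limit t' k) \<le> lip_const * \<bar>t - t'\<bar>"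
    by (simp add: hs_norm_eq_real)
qed

lemma picard_limit_fixed_point:
  assumes t: "t \<in> {a..a + local_time R}"
  shows "picard_limit t k = picard_map a x picard_limit t k"
proof -
  have "(\<lambda>n. (1/2::real)^n) \<longlonglongrightarrow> 0"
    by (rule LIMSEQ_power_zero) simp
  then have "(\<lambda>n. picard_iter (Suc n) t k) \<longlonglongrightarrow> picard_map a x picard_limit t k"
    unfolding picard_iter_Suc
    by (intro picard_map_tendsto[OF picard_iter_lip_path picard_limit_lip_path t, of "\<lambda>n. 2 * radius * (1/2)^n"]
        tendsto_mult_right_zero picard_limit_tail)
  moreover have "(\<lambda>n. picard_iter (Suc n) t k) \<longlonglongrightarrow> picard_limit t k"
    by (rule LIMSEQ_Suc[OF picard_iter_tendsto[OF t]])
  ultimately show ?thesis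
    using LIMSEQ_unique by blast
qed

end

section \<open>Solutions\<close>

lemma qg_sol_iff:
  "qg_sol \<alpha> \<mu> s th0 T th \<longleftrightarrow>
     (\<forall>t\<in>{0..T}. zm_real (th t) \<and> in_Hs s (th t)) \<and>
     (\<exists>M. \<forall>t\<in>{0..T}. hs_norm s (th t) \<le> M) \<and>
     (\<forall>t\<in>{0..T}. \<forall>k. set_integrable lborel {0..t} (\<lambda>\<tau>. qg_bilin \<alpha> \<mu> (th \<tau>) (th \<tau>) k) \<and>
        th t k = th0 k - (LINT \<tau>:{0..t}|lborel. qg_bilin \<alpha> \<mu> (th \<tau>) (th \<tau>) k))"
  unfolding qg_sol_def qg_nonlin_div_eq_bilin by (rule refl)

lemma qg_solD:
  assumes "qg_sol \<alpha> \<mu> s th0 T th" "t \<in> {0..T}"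
  shows "zm_real (th t)" "in_Hs0 s (th t)"
    and "set_integrable lborel {0..t} (\<lambda>\<tau>. qg_bilin \<alpha> \<mu> (th \<tau>) (th \<tau>) k)"
    and "th t k = th0 k - (LINT \<tau>:{0..t}|lborel. qg_bilin \<alpha> \<mu> (th \<tau>) (th \<tau>) k)"
proof -
  have "zm_real (th t)" "in_Hs s (th t)"
    and "set_integrable lborel {0..t} (\<lambda>\<tau>. qg_bilin \<alpha> \<mu> (th \<tau>) (th \<tau>) k)"
    and "th t k = th0 k - (LINT \<tau>:{0..t}|lborel. qg_bilin \<alpha> \<mu> (th \<tau>) (th \<tau>) k)"
    using assms unfolding qg_sol_iff by blast+
  then show "zm_real (th t)" "in_Hs0 s (th t)"
    and "set_integrable lborel {0..t} (\<lambda>\<tau>. qg_bilin \<alpha> \<mu> (th \<tau>) (th \<tau>) k)"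
    and "th t k = th0 k - (LINT \<tau>:{0..t}|lborel. qg_bilin \<alpha> \<mu> (th \<tau>) (th \<tau>) k)"
    by (simp_all add: in_Hs0_def zm_real_def)
qed

lemma qg_sol_bounded:
  assumes "qg_sol \<alpha> \<mu> s th0 T th"
  obtains \<rho> where "0 \<le> \<rho>" "\<And>t. t \<in> {0..T} \<Longrightarrow> hs_norm s (th t) \<le> \<rho>"
proof -
  obtain M where "\<forall>t\<in>{0..T}. hs_norm s (th t) \<le> M"
    using assms unfolding qg_sol_def by blast
  then show ?thesis
    using that[of "max 0 M"] by fastforce
qed

lemma qg_sol_mono: "qg_sol \<alpha> \<mu> s th0 T th \<Longrightarrow> T' \<le> T \<Longrightarrow> qg_sol \<alpha> \<mu> s th0 T' th"
  unfolding qg_sol_def by (meson atLeastAtMost_iff order_trans)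

lemma qg_sol_cong:
  assumes sol: "qg_sol \<alpha> \<mu> s th0 T th" and eq: "\<And>t. t \<in> {0..T} \<Longrightarrow> th t = th' t"
  shows "qg_sol \<alpha> \<mu> s th0 T th'"
proof -
  obtain \<rho> where \<rho>: "\<And>t. t \<in> {0..T} \<Longrightarrow> hs_norm s (th t) \<le> \<rho>"
    using qg_sol_bounded[OF sol] by blast
  have "set_integrable lborel {0..t} (\<lambda>\<tau>. qg_bilin \<alpha> \<mu> (th' \<tau>) (th' \<tau>) k) \<and>
      th' t k = th0 k - (LINT \<tau>:{0..t}|lborel. qg_bilin \<alpha> \<mu> (th' \<tau>) (th' \<tau>) k)" if t: "t \<in> {0..T}" for t k
  proof -
    have "(LINT \<tau>:{0..t}|lborel. qg_bilin \<alpha> \<mu> (th \<tau>) (th \<tau>) k) = (LINT \<tau>:{0..t}|lborel. qg_bilin \<alpha> \<mu> (th' \<tau>) (th' \<tau>) k)"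
      and "set_integrable lborel {0..t} (\<lambda>\<tau>. qg_bilin \<alpha> \<mu> (th \<tau>) (th \<tau>) k) \<longleftrightarrow>
        set_integrable lborel {0..t} (\<lambda>\<tau>. qg_bilin \<alpha> \<mu> (th' \<tau>) (th' \<tau>) k)"
      using t eq by (auto intro!: set_integral_Icc_cong)
    then show ?thesis
      using qg_solD(3,4)[OF sol t, of k] eq[OF t] by simp
  qed
  moreover have "zm_real (th' t) \<and> in_Hs s (th' t) \<and> hs_norm s (th' t) \<le> \<rho>" if t: "t \<in> {0..T}" for t
    using qg_solD(1,2)[OF sol t] \<rho>[OF t] eq[OF t] by (simp add: in_Hs0_def)
  ultimately show ?thesis
    unfolding qg_sol_iff by blast
qed

lemma qg_sol_eq_from:
  assumes sol: "qg_sol \<alpha> \<mu> s th0 T th" and "0 \<le> a" "a \<le> t" "t \<le> T"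
  shows "th t k = th a k - (LINT \<tau>:{a..t}|lborel. qg_bilin \<alpha> \<mu> (th \<tau>) (th \<tau>) k)"
  using qg_solD(4)[OF sol, of t k] qg_solD(4)[OF sol, of a k] assms
    set_integral_Icc_split(3)[OF \<open>0 \<le> a\<close> \<open>a \<le> t\<close> qg_solD(3)[OF sol, of t k]]
  by simp

context qg
begin

lemma lip_path_fixed_point_qg_sol:
  assumes f: "lip_path 0 T \<rho> L f" and fixed: "\<And>t k. t \<in> {0..T} \<Longrightarrow> f t k = picard_map 0 x f t k"
  shows "qg_sol \<alpha> \<mu> s x T f"
  unfolding qg_sol_iff
proof (intro conjI ballI allI exI)
  fix t
  assume "t \<in> {0..T}"
  then have t: "t \<in> {0..0+T}"
    by simp
  show "zm_real (f t)" and "hs_norm s (f t) \<le> \<rho>"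
    using lip_pathD[OF f t] by simp_all
  show "in_Hs s (f t)"
    using lip_pathD(2)[OF f t] by (simp add: in_Hs0_def)
  fix k
  show "set_integrable lborel {0..t} (\<lambda>\<tau>. qg_bilin \<alpha> \<mu> (f \<tau>) (f \<tau>) k)"
    using t by (intro qg_bilin_path_integrable[OF f]) simp_all
  show "f t k = x k - (LINT \<tau>:{0..t}|lborel. qg_bilin \<alpha> \<mu> (f \<tau>) (f \<tau>) k)"
    using fixed[of t k] t by (simp add: picard_map_def)
qed

lemma picard_fixed_point_exists:
  assumes "in_Hs0 s x" "zm_real x" "hs_norm s x \<le> R" "0 \<le> R"
  obtains f where "lip_path a (local_time R) (2 * (R + 1)) ((bilin_const + 1) * (2 * (R + 1))\<^sup>2) f"
    and "\<And>t k. t \<in> {a..a + local_time R} \<Longrightarrow> f t k = picard_map a x f t k"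
proof -
  interpret qg_picard \<alpha> \<mu> s a R x
    using assms by unfold_locales
  show ?thesis
    using that[OF picard_limit_lip_path[unfolded radius_def lip_const_def] picard_limit_fixed_point] .
qed

lemma qg_sol_local_exists:
  assumes "zm_real th0" "in_Hs s th0"
  shows "\<exists>th. qg_sol \<alpha> \<mu> s th0 (local_time (hs_norm s th0)) th"
proof -
  have "in_Hs0 s th0"
    using assms by (simp add: in_Hs0_def zm_real_def)
  then obtain f where f: "lip_path 0 (local_time (hs_norm s th0)) (2 * (hs_norm s th0 + 1))
      ((bilin_const + 1) * (2 * (hs_norm s th0 + 1))\<^sup>2) f"
    and fixed: "\<And>t k. t \<in> {0..0 + local_time (hs_norm s th0)} \<Longrightarrow> f t k = picard_map 0 th0 f t k"
    using picard_fixed_point_exists[of th0 "hs_norm s th0" 0] assms(1) by auto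
  show ?thesis
    using lip_path_fixed_point_qg_sol[OF f] fixed by auto
qed


lemma qg_sol_diff_eq_integral:
  assumes sol: "qg_sol \<alpha> \<mu> s th0 T th" and sol': "qg_sol \<alpha> \<mu> s th0 T th'"
    and "0 \<le> a" "a \<le> t" "t \<le> T" and "th a = th' a"
  shows "(\<lambda>k. th t k - th' t k) =
    (\<lambda>k. - (LINT \<sigma>:{a..t}|lborel. qg_bilin \<alpha> \<mu> (th \<sigma>) (th \<sigma>) k - qg_bilin \<alpha> \<mu> (th' \<sigma>) (th' \<sigma>) k))"
proof
  fix k
  have "set_integrable lborel {a..t} (\<lambda>\<sigma>. qg_bilin \<alpha> \<mu> (th \<sigma>) (th \<sigma>) k)"
    and "set_integrable lborel {a..t} (\<lambda>\<sigma>. qg_bilin \<alpha> \<mu> (th' \<sigma>) (th' \<sigma>) k)"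
    using assms by (auto intro!: set_integral_Icc_split(2)[OF \<open>0 \<le> a\<close> \<open>a \<le> t\<close>] qg_solD(3))
  then show "th t k - th' t k =
      - (LINT \<sigma>:{a..t}|lborel. qg_bilin \<alpha> \<mu> (th \<sigma>) (th \<sigma>) k - qg_bilin \<alpha> \<mu> (th' \<sigma>) (th' \<sigma>) k)"
    using qg_sol_eq_from[OF sol assms(3-5), of k] qg_sol_eq_from[OF sol' assms(3-5), of k] \<open>th a = th' a\<close>
    by simp
qed

text \<open>
  On an interval of length local_time rho after a common value, the H^s distance of two solutions
  bounded by rho halves under each application of the integral equation, hence vanishes.
\<close>

lemma qg_sol_diff_halves:
  assumes sol: "qg_sol \<alpha> \<mu> s th0 T th" and sol': "qg_sol \<alpha> \<mu> s th0 T th'"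
    and \<rho>: "0 \<le> \<rho>" "\<And>t. t \<in> {0..T} \<Longrightarrow> hs_norm s (th t) \<le> \<rho>" "\<And>t. t \<in> {0..T} \<Longrightarrow> hs_norm s (th' t) \<le> \<rho>"
    and "0 \<le> a" "th a = th' a"
    and D: "\<And>\<tau>. \<tau> \<in> {a..min T (a + local_time \<rho>)} \<Longrightarrow> hs_norm s (\<lambda>k. th \<tau> k - th' \<tau> k) \<le> D"
    and t: "t \<in> {a..min T (a + local_time \<rho>)}"
  shows "hs_norm s (\<lambda>k. th t k - th' t k) \<le> D / 2"
proof -
  have "0 \<le> D"
    using D[OF t] order_trans[OF hs_norm_nonneg] by blast
  have "a \<le> t" "t \<le> T" and sub: "\<tau> \<in> {a..t} \<Longrightarrow> \<tau> \<in> {0..T}" for \<tau>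
    using t \<open>0 \<le> a\<close> by auto
  note int = set_integral_Icc_split(2)[OF \<open>0 \<le> a\<close> \<open>a \<le> t\<close> qg_solD(3)[OF _ sub[of t]]]
  have "hs_norm s (\<lambda>k. th t k - th' t k) = hs_norm s (\<lambda>k. LINT \<tau>:{a..t}|lborel.
      qg_bilin \<alpha> \<mu> (th \<tau>) (th \<tau>) k - qg_bilin \<alpha> \<mu> (th' \<tau>) (th' \<tau>) k)"
    unfolding qg_sol_diff_eq_integral[OF sol sol' \<open>0 \<le> a\<close> \<open>a \<le> t\<close> \<open>t \<le> T\<close> \<open>th a = th' a\<close>] by simp
  also have "\<dots> \<le> (t - a) * (bilin_const * (2 * \<rho>) * D)"
    using t by (intro hs_norm_integral_bilin_diff_le(2)[OF \<open>a \<le> t\<close> int[OF sol] int[OF sol']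
        qg_solD(2)[OF sol sub] qg_solD(2)[OF sol' sub] \<rho>(2)[OF sub] \<rho>(3)[OF sub] D]) auto
  also have "\<dots> \<le> local_time \<rho> * (bilin_const * (2 * \<rho>) * D)"
    using t \<rho>(1) \<open>0 \<le> D\<close> bilin_const_nonneg by (intro mult_right_mono) simp_all
  also have "\<dots> \<le> D / 2"
    using \<rho>(1) \<open>0 \<le> D\<close> by (intro local_time_contraction) simp_all
  finally show ?thesis .
qed

lemma qg_sol_agree_step:
  assumes sol: "qg_sol \<alpha> \<mu> s th0 T th" and sol': "qg_sol \<alpha> \<mu> s th0 T th'"
    and \<rho>: "0 \<le> \<rho>" "\<And>t. t \<in> {0..T} \<Longrightarrow> hs_norm s (th t) \<le> \<rho>" "\<And>t. t \<in> {0..T} \<Longrightarrow> hs_norm s (th' t) \<le> \<rho>"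
    and "0 \<le> a" and agree: "\<And>t. t \<in> {0..a} \<Longrightarrow> th t = th' t"
    and t: "t \<in> {0..T}" "t \<le> a + local_time \<rho>"
  shows "th t = th' t"
proof (cases "t \<le> a")
  case False
  define J where "J = {a..min T (a + local_time \<rho>)}"
  have "th a = th' a"
    using agree \<open>0 \<le> a\<close> by simp
  have J: "\<sigma> \<in> {0..T}" if "\<sigma> \<in> J" for \<sigma>
    using that \<open>0 \<le> a\<close> unfolding J_def by auto
  have "\<forall>\<sigma>\<in>J. hs_norm s (\<lambda>k. th \<sigma> k - th' \<sigma> k) \<le> 2 * \<rho> * (1/2)^j" for j
  proof (induction j)
    case 0
    show ?case
      using in_Hs0_diff(2)[OF qg_solD(2)[OF sol J] qg_solD(2)[OF sol' J]] \<rho>(2,3)[OF J] by fastforce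
  next
    case (Suc j)
    have "hs_norm s (\<lambda>k. th \<sigma> k - th' \<sigma> k) \<le> 2 * \<rho> * (1/2)^j / 2" if "\<sigma> \<in> J" for \<sigma>
      using Suc.IH that unfolding J_def by (intro qg_sol_diff_halves[OF sol sol' \<rho> \<open>0 \<le> a\<close> \<open>th a = th' a\<close>]) auto
    then show ?case
      by simp
  qed
  moreover have "t \<in> J"
    using t False unfolding J_def by simp
  moreover have "(\<lambda>j. 2 * \<rho> * (1/2::real)^j) \<longlonglongrightarrow> 0"
    by (intro tendsto_mult_right_zero LIMSEQ_power_zero) simp
  ultimately have "hs_norm s (\<lambda>k. th t k - th' t k) \<le> 0"
    using LIMSEQ_le_const by (metis (no_types, lifting))
  then have "(\<lambda>k. th t k - th' t k) = (\<lambda>k. 0)"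
    using hs_norm_eq_0_imp_zero[OF in_Hs0_diff(1)[OF qg_solD(2)[OF sol t(1)] qg_solD(2)[OF sol' t(1)]] s_nonneg]
      hs_norm_nonneg[of s "\<lambda>k. th t k - th' t k"] by linarith
  then show ?thesis
    by (simp add: fun_eq_iff)
qed (use agree t in simp)

lemma qg_sol_unique:
  assumes sol: "qg_sol \<alpha> \<mu> s th0 T th" and sol': "qg_sol \<alpha> \<mu> s th0 T th'" and t: "t \<in> {0..T}"
  shows "th t = th' t"
proof -
  obtain \<rho>1 \<rho>2 where "0 \<le> \<rho>1" "0 \<le> \<rho>2"
    and "\<And>t. t \<in> {0..T} \<Longrightarrow> hs_norm s (th t) \<le> \<rho>1" "\<And>t. t \<in> {0..T} \<Longrightarrow> hs_norm s (th' t) \<le> \<rho>2"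
    by (metis qg_sol_bounded[OF sol] qg_sol_bounded[OF sol'])
  then have \<rho>: "0 \<le> \<rho>1 + \<rho>2" and bound: "\<And>t. t \<in> {0..T} \<Longrightarrow> hs_norm s (th t) \<le> \<rho>1 + \<rho>2"
    "\<And>t. t \<in> {0..T} \<Longrightarrow> hs_norm s (th' t) \<le> \<rho>1 + \<rho>2"
    by (simp_all add: add_increasing add_increasing2)
  define h where "h = local_time (\<rho>1 + \<rho>2)"
  have "0 < h"
    unfolding h_def using \<rho> by (simp add: local_time_pos)
  have "th t = th' t" if "t \<in> {0..T}" "t \<le> real n * h" for n t
    using that
  proof (induction n arbitrary: t)
    case 0
    then have "t = 0"
      using \<open>0 < h\<close> by simp
    then show ?case
      using qg_solD(4)[OF sol 0(1)] qg_solD(4)[OF sol' 0(1)] set_integral_Icc_point[of 0]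
      by (simp add: fun_eq_iff)
  next
    case (Suc n)
    show ?case
    proof (cases "real n * h \<le> T")
      case True
      have "0 \<le> real n * h" "t \<le> real n * h + h"
        using \<open>0 < h\<close> Suc.prems(2) by (simp_all add: algebra_simps)
      moreover have "th t' = th' t'" if "t' \<in> {0..real n * h}" for t'
        using Suc.IH[of t'] that True by simp
      ultimately show ?thesis
        using qg_sol_agree_step[OF sol sol' \<rho> bound, of "real n * h" t] Suc.prems(1)
        unfolding h_def by blast
    next
      case False
      then show ?thesis
        using Suc.IH Suc.prems by simp
    qed
  qed
  moreover obtain n :: nat where "t / h \<le> real n"
    using real_arch_simple by blast
  ultimately show ?thesis
    using t \<open>0 < h\<close> by (simp add: divide_le_eq)
qed


lemma qg_sol_glue_equation:
  assumes sol: "qg_sol \<alpha> \<mu> s th0 t0 th" and "0 \<le> t0"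
    and f: "lip_path t0 T \<rho> L f" and fixed: "\<And>t k. t \<in> {t0..t0+T} \<Longrightarrow> f t k = picard_map t0 (th t0) f t k"
    and g_th: "\<And>t. t \<le> t0 \<Longrightarrow> g t = th t" and g_f: "\<And>t. t \<in> {t0..t0+T} \<Longrightarrow> g t = f t"
    and t: "t \<in> {0..t0+T}"
  shows "set_integrable lborel {0..t} (\<lambda>\<tau>. qg_bilin \<alpha> \<mu> (g \<tau>) (g \<tau>) k) \<and>
    g t k = th0 k - (LINT \<tau>:{0..t}|lborel. qg_bilin \<alpha> \<mu> (g \<tau>) (g \<tau>) k)"
proof -
  have int_g: "set_integrable lborel {0..t'} (\<lambda>\<tau>. qg_bilin \<alpha> \<mu> (g \<tau>) (g \<tau>) k)"
    and eq_g: "(LINT \<tau>:{0..t'}|lborel. qg_bilin \<alpha> \<mu> (g \<tau>) (g \<tau>) k) =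
      (LINT \<tau>:{0..t'}|lborel. qg_bilin \<alpha> \<mu> (th \<tau>) (th \<tau>) k)"
    if "t' \<in> {0..t0}" for t'
    using qg_solD(3)[OF sol that] that g_th set_integral_Icc_cong[of 0 t' "\<lambda>\<tau>. qg_bilin \<alpha> \<mu> (g \<tau>) (g \<tau>) k"]
    by auto
  show ?thesis
  proof (cases "t \<le> t0")
    case True
    then have "t \<in> {0..t0}"
      using t by simp
    then show ?thesis
      using int_g eq_g qg_solD(4)[OF sol] g_th[OF True] by simp
  next
    case False
    then have t: "t \<in> {t0..t0+T}" and t0: "t0 \<in> {0..t0}" and "t0 \<le> t"
      using t \<open>0 \<le> t0\<close> by simp_all
    have "set_integrable lborel {t0..t} (\<lambda>\<tau>. qg_bilin \<alpha> \<mu> (f \<tau>) (f \<tau>) k)"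
      using t by (intro qg_bilin_path_integrable[OF f]) simp_all
    moreover have "(LINT \<tau>:{t0..t}|lborel. qg_bilin \<alpha> \<mu> (g \<tau>) (g \<tau>) k) =
        (LINT \<tau>:{t0..t}|lborel. qg_bilin \<alpha> \<mu> (f \<tau>) (f \<tau>) k)"
      and "set_integrable lborel {t0..t} (\<lambda>\<tau>. qg_bilin \<alpha> \<mu> (g \<tau>) (g \<tau>) k) \<longleftrightarrow>
        set_integrable lborel {t0..t} (\<lambda>\<tau>. qg_bilin \<alpha> \<mu> (f \<tau>) (f \<tau>) k)"
      using t g_f by (intro set_integral_Icc_cong; simp)+
    ultimately have int1: "set_integrable lborel {t0..t} (\<lambda>\<tau>. qg_bilin \<alpha> \<mu> (g \<tau>) (g \<tau>) k)"
      and eq1: "(LINT \<tau>:{t0..t}|lborel. qg_bilin \<alpha> \<mu> (g \<tau>) (g \<tau>) k) =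
        (LINT \<tau>:{t0..t}|lborel. qg_bilin \<alpha> \<mu> (f \<tau>) (f \<tau>) k)"
      by simp_all
    have int: "set_integrable lborel {0..t} (\<lambda>\<tau>. qg_bilin \<alpha> \<mu> (g \<tau>) (g \<tau>) k)"
      by (rule set_integrable_Icc_join[OF \<open>0 \<le> t0\<close> \<open>t0 \<le> t\<close> int_g[OF t0] int1])
    have "g t k = th t0 k - (LINT \<tau>:{t0..t}|lborel. qg_bilin \<alpha> \<mu> (f \<tau>) (f \<tau>) k)"
      using g_f[OF t] fixed[OF t] by (simp add: picard_map_def)
    also have "\<dots> = th0 k - (LINT \<tau>:{0..t}|lborel. qg_bilin \<alpha> \<mu> (g \<tau>) (g \<tau>) k)"
      using qg_solD(4)[OF sol t0, of k] eq_g[OF t0] eq1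
        set_integral_Icc_split(3)[OF \<open>0 \<le> t0\<close> \<open>t0 \<le> t\<close> int] by simp
    finally show ?thesis
      using int by simp
  qed
qed

lemma qg_sol_extend:
  assumes sol: "qg_sol \<alpha> \<mu> s th0 t0 th" and "0 \<le> t0" "0 \<le> T"
    and f: "lip_path t0 T \<rho> L f" and fixed: "\<And>t k. t \<in> {t0..t0+T} \<Longrightarrow> f t k = picard_map t0 (th t0) f t k"
  shows "qg_sol \<alpha> \<mu> s th0 (t0 + T) (\<lambda>t. if t \<le> t0 then th t else f t)"
proof -
  define g where "g t = (if t \<le> t0 then th t else f t)" for t
  have "f t0 = th t0"
    using fixed[of t0] \<open>0 \<le> T\<close> set_integral_Icc_point[of t0] by (simp add: fun_eq_iff picard_map_def)
  then have g_th: "t \<le> t0 \<Longrightarrow> g t = th t" and g_f: "t \<in> {t0..t0+T} \<Longrightarrow> g t = f t" for t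
    unfolding g_def by auto
  obtain M where M: "\<And>t. t \<in> {0..t0} \<Longrightarrow> hs_norm s (th t) \<le> M"
    using qg_sol_bounded[OF sol] by blast
  have bound: "zm_real (g t) \<and> in_Hs s (g t) \<and> hs_norm s (g t) \<le> max M \<rho>" if t: "t \<in> {0..t0+T}" for t
  proof (cases "t \<le> t0")
    case True
    then have "t \<in> {0..t0}"
      using t by simp
    then show ?thesis
      using qg_solD(1,2)[OF sol] M g_th[OF True] by (simp add: in_Hs0_def le_max_iff_disj)
  next
    case False
    then have "t \<in> {t0..t0+T}"
      using t by simp
    then show ?thesis
      using lip_pathD[OF f] g_f by (simp add: in_Hs0_def le_max_iff_disj)
  qed
  have "qg_sol \<alpha> \<mu> s th0 (t0 + T) g"
    unfolding qg_sol_iff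
    using bound qg_sol_glue_equation[OF sol \<open>0 \<le> t0\<close> f fixed g_th g_f] by blast
  then show ?thesis
    unfolding g_def .
qed

lemma qg_sol_continue:
  assumes sol: "qg_sol \<alpha> \<mu> s th0 t0 th" and "0 \<le> t0" and R: "0 \<le> R" "hs_norm s (th t0) \<le> R"
  shows "\<exists>th'. qg_sol \<alpha> \<mu> s th0 (t0 + local_time R) th'"
proof -
  have "t0 \<in> {0..t0}"
    using \<open>0 \<le> t0\<close> by simp
  then obtain f where f: "lip_path t0 (local_time R) (2 * (R + 1)) ((bilin_const + 1) * (2 * (R + 1))\<^sup>2) f"
    and "\<And>t k. t \<in> {t0..t0 + local_time R} \<Longrightarrow> f t k = picard_map t0 (th t0) f t k"
    using picard_fixed_point_exists[OF qg_solD(2,1)[OF sol] R(2) R(1)] by blast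
  then show ?thesis
    using qg_sol_extend[OF sol \<open>0 \<le> t0\<close> less_imp_le[OF local_time_pos[OF R(1)]] f] by blast
qed

section \<open>Maximal solutions\<close>


definition existence_times :: "fcoef \<Rightarrow> real set" where
  "existence_times th0 = {T. 0 < T \<and> (\<exists>th. qg_sol \<alpha> \<mu> s th0 T th)}"

lemma local_time_in_existence_times:
  assumes "zm_real th0" "in_Hs s th0"
  shows "local_time (hs_norm s th0) \<in> existence_times th0"
  using qg_sol_local_exists[OF assms] local_time_pos[OF hs_norm_nonneg]
  unfolding existence_times_def by blast

text \<open>Solutions on different intervals agree where both are defined, so they can be patched together.\<close>

lemma qg_sol_below_Sup:
  assumes bdd: "bdd_above (existence_times th0)" and ne: "existence_times th0 \<noteq> {}"
  shows "\<exists>th. \<forall>T. 0 < T \<and> T < Sup (existence_times th0) \<longrightarrow> qg_sol \<alpha> \<mu> s th0 T th"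
proof -
  let ?S = "existence_times th0"
  define sol where "sol T = (SOME th. qg_sol \<alpha> \<mu> s th0 T th)" for T
  have sol: "qg_sol \<alpha> \<mu> s th0 T (sol T)" if "T \<in> ?S" for T
    using that someI_ex[of "qg_sol \<alpha> \<mu> s th0 T"] unfolding sol_def existence_times_def by blast
  have above: "\<exists>T'. T' \<in> ?S \<and> t < T'" if "t < Sup ?S" for t
    using that less_cSup_iff[OF ne bdd] by blast
  define pick where "pick t = (SOME T. T \<in> ?S \<and> t < T)" for t
  have pick: "pick t \<in> ?S" "t < pick t" if "t < Sup ?S" for t
    using someI_ex[OF above[OF that]] unfolding pick_def by blast+
  define th where "th t = sol (pick t) t" for t
  have "qg_sol \<alpha> \<mu> s th0 T th" if "0 < T" "T < Sup ?S" for T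
  proof -
    obtain T' where T': "T' \<in> ?S" "T < T'"
      using above[OF \<open>T < Sup ?S\<close>] by blast
    show ?thesis
    proof (rule qg_sol_cong[OF qg_sol_mono[OF sol[OF T'(1)]]])
      show "T \<le> T'"
        using T'(2) by simp
      fix t
      assume t: "t \<in> {0..T}"
      then have "t < Sup ?S"
        using that by simp
      then have "t \<in> {0..min T' (pick t)}"
        using t T' pick(2)[of t] by simp
      then show "sol T' t = th t"
        unfolding th_def using qg_sol_unique[OF qg_sol_mono[OF sol[OF T'(1)], of "min T' (pick t)"]
          qg_sol_mono[OF sol[OF pick(1)[OF \<open>t < Sup ?S\<close>]], of "min T' (pick t)"]] by simp
    qed
  qed
  then show ?thesis
    by blast
qed

text \<open>
  If the H^s norm stayed below some R near the supremum, a local solution of length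
  local_time R started close enough to the supremum would extend beyond it.
\<close>

lemma qg_sol_blowup:
  assumes bdd: "bdd_above (existence_times th0)" and ne: "existence_times th0 \<noteq> {}"
    and sol: "\<And>T. 0 < T \<Longrightarrow> T < Sup (existence_times th0) \<Longrightarrow> qg_sol \<alpha> \<mu> s th0 T th"
  shows "Limsup (at_left (Sup (existence_times th0))) (\<lambda>t. ereal (hs_norm s (th t))) = \<infinity>"
proof (rule ccontr)
  let ?S = "existence_times th0"
  assume finite: "Limsup (at_left (Sup ?S)) (\<lambda>t. ereal (hs_norm s (th t))) \<noteq> \<infinity>"
  have "\<exists>R0::real. Limsup (at_left (Sup ?S)) (\<lambda>t. ereal (hs_norm s (th t))) < ereal R0"
    using finite by (cases "Limsup (at_left (Sup ?S)) (\<lambda>t. ereal (hs_norm s (th t)))") (auto intro: gt_ex)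
  then obtain R0 :: real where "Limsup (at_left (Sup ?S)) (\<lambda>t. ereal (hs_norm s (th t))) < ereal R0"
    by blast
  then have "eventually (\<lambda>t. ereal (hs_norm s (th t)) < ereal R0) (at_left (Sup ?S))"
    by (rule Limsup_lessD)
  then obtain b where "b < Sup ?S" and below: "\<And>t. b < t \<Longrightarrow> t < Sup ?S \<Longrightarrow> hs_norm s (th t) < R0"
    unfolding eventually_at_left_field by auto
  obtain T where "T \<in> ?S"
    using ne by blast
  then have "0 < T" "T \<le> Sup ?S"
    using cSup_upper[OF _ bdd] unfolding existence_times_def by auto
  then have "0 < Sup ?S"
    by simp
  define R where "R = max R0 0"
  have "0 < local_time R"
    unfolding R_def by (rule local_time_pos) simp
  define t0 where "t0 = max (Sup ?S / 2) (max ((b + Sup ?S) / 2) (Sup ?S - local_time R / 2))"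
  have t0: "0 < t0" "t0 < Sup ?S" "b < t0" "Sup ?S < t0 + local_time R"
    unfolding t0_def using \<open>0 < Sup ?S\<close> \<open>b < Sup ?S\<close> \<open>0 < local_time R\<close>
    by (auto simp: less_max_iff_disj max_less_iff_conj)
  have "0 \<le> R" "hs_norm s (th t0) \<le> R"
    using below[OF t0(3,2)] unfolding R_def by simp_all
  then obtain th' where "qg_sol \<alpha> \<mu> s th0 (t0 + local_time R) th'"
    using qg_sol_continue[OF sol[OF t0(1,2)] less_imp_le[OF t0(1)]] by blast
  then have "t0 + local_time R \<in> ?S"
    using t0(1) \<open>0 < local_time R\<close> unfolding existence_times_def by auto
  then show False
    using cSup_upper[OF _ bdd] t0(4) by force
qed

end

theorem theorem3p1:
  fixes \<alpha> \<mu> s :: real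
  assumes "1/2 \<le> \<alpha>" and "\<alpha> \<le> 1" and "\<mu> > 0" and "s > 1"
  shows "(\<exists>Tf :: real \<Rightarrow> real. \<forall>th0. zm_real th0 \<and> in_Hs s th0 \<longrightarrow>
            Tf (hs_norm s th0) > 0 \<and>
            (\<exists>th. qg_sol \<alpha> \<mu> s th0 (Tf (hs_norm s th0)) th \<and>
               (\<forall>th'. qg_sol \<alpha> \<mu> s th0 (Tf (hs_norm s th0)) th' \<longrightarrow>
                  (\<forall>t\<in>{0..Tf (hs_norm s th0)}. th' t = th t))))
       \<and> (\<forall>th0. zm_real th0 \<and> in_Hs s th0 \<longrightarrow>
            (let S = {T. T > 0 \<and> (\<exists>th. qg_sol \<alpha> \<mu> s th0 T th)} in
             \<not> bdd_above S \<or>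
             ((\<exists>th. \<forall>T. 0 < T \<and> T < Sup S \<longrightarrow> qg_sol \<alpha> \<mu> s th0 T th) \<and>
              (\<forall>th. (\<forall>T. 0 < T \<and> T < Sup S \<longrightarrow> qg_sol \<alpha> \<mu> s th0 T th) \<longrightarrow>
                 Limsup (at_left (Sup S)) (\<lambda>t. ereal (hs_norm s (th t))) = \<infinity>))))"
proof -
  interpret qg \<alpha> \<mu> s
    using assms by unfold_locales simp_all
  have local: "0 < local_time (hs_norm s th0) \<and>
      (\<exists>th. qg_sol \<alpha> \<mu> s th0 (local_time (hs_norm s th0)) th \<and>
        (\<forall>th'. qg_sol \<alpha> \<mu> s th0 (local_time (hs_norm s th0)) th' \<longrightarrow>
          (\<forall>t\<in>{0..local_time (hs_norm s th0)}. th' t = th t)))"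
    if "zm_real th0" "in_Hs s th0" for th0
    using qg_sol_local_exists[OF that] qg_sol_unique local_time_pos[OF hs_norm_nonneg] by blast
  have maximal: "\<not> bdd_above (existence_times th0) \<or>
      ((\<exists>th. \<forall>T. 0 < T \<and> T < Sup (existence_times th0) \<longrightarrow> qg_sol \<alpha> \<mu> s th0 T th) \<and>
       (\<forall>th. (\<forall>T. 0 < T \<and> T < Sup (existence_times th0) \<longrightarrow> qg_sol \<alpha> \<mu> s th0 T th) \<longrightarrow>
          Limsup (at_left (Sup (existence_times th0))) (\<lambda>t. ereal (hs_norm s (th t))) = \<infinity>))"
    if "zm_real th0" "in_Hs s th0" for th0
    using qg_sol_below_Sup qg_sol_blowup local_time_in_existence_times[OF that] by blast
  show ?thesis
    unfolding Let_def existence_times_def[symmetric]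
    using local maximal by (intro conjI exI[of _ local_time] allI impI) simp_all
qed

end
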